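(* Let $n\ge1$ and $A=\mathbb{C}[[\lambda,q,p]]$ with $\lambda=(\lambda_1,\dots,\lambda_n)$, $q=(q_1,\dots,q_n)$, $p=(p_1,\dots,p_n)$, graded so that $q_i,p_i$ have degree $1$ and $\lambda_i$ have degree $2$, and equipped with the $\mathbb{C}[[\lambda]]$-linear Poisson bracket $\{f,g\}=\sum_{i=1}^n(\partial_{q_i}f\,\partial_{p_i}g-\partial_{p_i}f\,\partial_{q_i}g)$. Let $I\subset A$ be the ideal generated by $p_1q_1-\lambda_1,\dots,p_nq_n-\lambda_n$. Let $H\in A$ satisfy $H=\sum_{i=1}^n\alpha_i p_iq_i+o(2)$ with $\alpha_i\in\mathbb{C}$. If $\alpha_1,\dots,\alpha_n$ are linearly independent over $\mathbb{Q}$, then there exist a Poisson automorphism $\exp$ of $A$ and power series $\widehat{g_1},\dots,\widehat{g_n}\in\mathbb{C}[[\lambda]]$ such that $$\exp(H)-\sum_{i=1}^n(\alpha_i+\widehat{g_i}(\lambda))\,p_iq_i\in I^2+\mathbb{C}[[\lambda]].$$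
   Context: For series $f,g$, $f=g+o(l)$ means that $f-g$ contains only homogeneous terms of degree strictly greater than $l$ for the grading specified. *)

theory Defs
  imports Complex_Main
begin

text \<open>Formal power series A = C[[lambda,q,p]] in 3n variables, the index set of size n
  being a finite type 'n.\<close>

datatype 'n var = Lam 'n | Qv 'n | Pv 'n

type_synonym 'n mon = "'n var \<Rightarrow> nat"
type_synonym 'n ps = "'n mon \<Rightarrow> complex"

definition ps_const :: "complex \<Rightarrow> 'n ps" where
  "ps_const c = (\<lambda>m. if m = (\<lambda>_. 0) then c else 0)"

definition ps_var :: "'n var \<Rightarrow> 'n ps" where
  "ps_var v = (\<lambda>m. if m = (\<lambda>w. if w = v then 1 else 0) then 1 else 0)"

definition ps_add :: "'n ps \<Rightarrow> 'n ps \<Rightarrow> 'n ps" where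
  "ps_add f g = (\<lambda>m. f m + g m)"

definition ps_diff :: "'n ps \<Rightarrow> 'n ps \<Rightarrow> 'n ps" where
  "ps_diff f g = (\<lambda>m. f m - g m)"

text \<open>Cauchy product (the index set of decompositions is finite since 'n is finite).\<close>
definition ps_mult :: "'n ps \<Rightarrow> 'n ps \<Rightarrow> 'n ps" where
  "ps_mult f g = (\<lambda>m. \<Sum>(a,b)\<in>{(a,b). \<forall>v. a v + b v = m v}. f a * g b)"

definition ps_sum :: "('i \<Rightarrow> 'n ps) \<Rightarrow> 'i set \<Rightarrow> 'n ps" where
  "ps_sum F S = (\<lambda>m. \<Sum>i\<in>S. F i m)"

definition ps_deriv :: "'n var \<Rightarrow> 'n ps \<Rightarrow> 'n ps" where
  "ps_deriv v f = (\<lambda>m. of_nat (Suc (m v)) * f (m(v := Suc (m v))))"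

definition poisson :: "'n::finite ps \<Rightarrow> 'n ps \<Rightarrow> 'n ps" where
  "poisson f g = ps_sum (\<lambda>i. ps_diff (ps_mult (ps_deriv (Qv i) f) (ps_deriv (Pv i) g))
                                     (ps_mult (ps_deriv (Pv i) f) (ps_deriv (Qv i) g))) UNIV"

definition mon_deg :: "'n::finite mon \<Rightarrow> nat" where
  "mon_deg m = (\<Sum>i\<in>UNIV. 2 * m (Lam i) + m (Qv i) + m (Pv i))"

definition eq_plus_o :: "nat \<Rightarrow> 'n::finite ps \<Rightarrow> 'n ps \<Rightarrow> bool" where
  "eq_plus_o l f g \<longleftrightarrow> (\<forall>m. mon_deg m \<le> l \<longrightarrow> f m = g m)"

definition lam_series :: "'n ps set" where
  "lam_series = {f. \<forall>m. f m \<noteq> 0 \<longrightarrow> (\<forall>i. m (Qv i) = 0 \<and> m (Pv i) = 0)}"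

definition pq :: "'n \<Rightarrow> 'n ps" where
  "pq i = ps_mult (ps_var (Pv i)) (ps_var (Qv i))"

definition gen :: "'n \<Rightarrow> 'n ps" where
  "gen i = ps_diff (pq i) (ps_var (Lam i))"

definition ideal_I2 :: "'n::finite ps set" where
  "ideal_I2 = {ps_sum (\<lambda>(i,j). ps_mult (a i j) (ps_mult (gen i) (gen j))) UNIV | a. True}"

definition poisson_aut :: "('n::finite ps \<Rightarrow> 'n ps) \<Rightarrow> bool" where
  "poisson_aut \<phi> \<longleftrightarrow> bij \<phi>
     \<and> (\<forall>f g. \<phi> (ps_add f g) = ps_add (\<phi> f) (\<phi> g))
     \<and> (\<forall>f g. \<phi> (ps_mult f g) = ps_mult (\<phi> f) (\<phi> g))
     \<and> \<phi> (ps_const 1) = ps_const 1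
     \<and> (\<forall>c f. c \<in> lam_series \<longrightarrow> \<phi> (ps_mult c f) = ps_mult c (\<phi> f))
     \<and> (\<forall>f g. \<phi> (poisson f g) = poisson (\<phi> f) (\<phi> g))"

end

theory Submission
  imports Defs "HOL-Library.Function_Algebras" "HOL-Library.FuncSet"
begin

text \<open>The adjoint action of the quadratic part \<open>H\<^sub>2 = \<Sum>\<^sub>i \<alpha>\<^sub>i p\<^sub>i q\<^sub>i\<close> is diagonal on monomials: it
  multiplies \<open>\<lambda>\<^sup>a q\<^sup>b p\<^sup>c\<close> by \<open>\<Sum>\<^sub>i \<alpha>\<^sub>i (b\<^sub>i - c\<^sub>i)\<close>, which by the rational independence of
  the \<open>\<alpha>\<^sub>i\<close> vanishes only on the diagonal monomials (\<open>b = c\<close>), i.e. on products of the \<open>\<lambda>\<^sub>i\<close> and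
  the \<open>p\<^sub>i q\<^sub>i\<close>. Solving this homological equation degree by degree produces a generator \<open>F\<close> of
  order at least 3 such that the Lie transform \<open>exp(ad F)\<close> removes every off-diagonal term of \<open>H\<close>
  (Birkhoff normalisation). The Lie transform is a Poisson automorphism, because \<open>ad F\<close> is a
  derivation of both the product and the bracket and \<open>exp(ad (-F))\<close> inverts it. Finally, a series in
  the \<open>\<lambda>\<^sub>i\<close> and the \<open>p\<^sub>i q\<^sub>i\<close> is linear in the \<open>p\<^sub>i q\<^sub>i\<close> modulo \<open>I\<^sup>2 + \<complex>[[\<lambda>]]\<close>, since
  \<open>p\<^sub>i q\<^sub>i p\<^sub>j q\<^sub>j \<equiv> \<lambda>\<^sub>i p\<^sub>j q\<^sub>j + \<lambda>\<^sub>j p\<^sub>i q\<^sub>i - \<lambda>\<^sub>i \<lambda>\<^sub>j\<close> modulo \<open>I\<^sup>2\<close>.\<close>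

section \<open>The power series ring\<close>

lemma UNIV_var: "(UNIV :: 'a var set) = range Lam \<union> range Qv \<union> range Pv"
  by auto (metis rangeI var.exhaust)

instance var :: (finite) finite
  by standard (simp add: UNIV_var)

lemma finite_mon_le: "finite {a :: 'n::finite mon. a \<le> m}"
proof -
  have "{a :: 'n mon. a \<le> m} = Pi\<^sub>E UNIV (\<lambda>v. {..m v})"
    by (auto simp: PiE_UNIV_domain le_fun_def)
  then show ?thesis by (simp add: finite_PiE)
qed

lemma mon_eq_add_iff: "((m::'n mon) = a + b) = (a \<le> m \<and> m - a = b)"
proof -
  have "(\<forall>x. m x = a x + b x) = ((\<forall>x. a x \<le> m x) \<and> (\<forall>x. m x - a x = b x))"
    by (metis add_diff_cancel_left' le_add1 le_add_diff_inverse)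
  then show ?thesis by (simp add: le_fun_def fun_eq_iff)
qed

lemma mon_add_diff: "(a :: 'n mon) \<le> m \<Longrightarrow> a + (m - a) = m"
  by (metis mon_eq_add_iff)

definition mon_splits :: "'n mon \<Rightarrow> ('n mon \<times> 'n mon) set" where
  "mon_splits m = {(a, b). a + b = m}"

lemma mon_splits_eq_image: "mon_splits m = (\<lambda>a. (a, m - a)) ` {a. a \<le> m}"
proof
  have "a \<le> m \<and> b = m - a" if "a + b = m" for a b
    using mon_eq_add_iff[of m a b] that by auto
  then show "mon_splits m \<subseteq> (\<lambda>a. (a, m - a)) ` {a. a \<le> m}"
    by (auto simp: mon_splits_def)
  show "(\<lambda>a. (a, m - a)) ` {a. a \<le> m} \<subseteq> mon_splits m"
    by (auto simp: mon_splits_def mon_add_diff)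
qed

lemma finite_mon_splits: "finite (mon_splits (m :: 'n::finite mon))"
  by (simp add: mon_splits_eq_image finite_mon_le)

lemma ps_mult_eq_splits: "ps_mult f g m = (\<Sum>(a, b)\<in>mon_splits m. f a * g b)"
proof -
  have "mon_splits m = {(a, b). \<forall>v. a v + b v = m v}"
    by (auto simp: mon_splits_def fun_eq_iff)
  then show ?thesis by (simp add: ps_mult_def)
qed

lemma ps_mult_eq_le: "ps_mult f g (m :: 'n::finite mon) = (\<Sum>a | a \<le> m. f a * g (m - a))"
proof -
  have "inj_on (\<lambda>a. (a, m - a)) {a. a \<le> m}" by (auto simp: inj_on_def)
  then show ?thesis by (simp add: ps_mult_eq_splits mon_splits_eq_image sum.reindex)
qed

lemma ps_mult_commute: "ps_mult f g = ps_mult g (f :: 'n::finite ps)"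
proof
  fix m :: "'n mon"
  show "ps_mult f g m = ps_mult g f m"
    unfolding ps_mult_eq_splits
    by (rule sum.reindex_bij_witness[of _ prod.swap prod.swap]) (auto simp: mon_splits_def add.commute)
qed

lemma ps_mult_assoc: "ps_mult (ps_mult f g) h = ps_mult f (ps_mult g (h :: 'n::finite ps))"
proof
  fix m :: "'n mon"
  have L: "ps_mult (ps_mult f g) h m
      = (\<Sum>(p, q)\<in>Sigma (mon_splits m) (\<lambda>p. mon_splits (fst p)). f (fst q) * g (snd q) * h (snd p))"
    unfolding ps_mult_eq_splits
    by (subst sum.Sigma[symmetric]) (auto simp: finite_mon_splits case_prod_beta sum_distrib_right intro!: sum.cong)
  have R: "ps_mult f (ps_mult g h) m
      = (\<Sum>(p, q)\<in>Sigma (mon_splits m) (\<lambda>p. mon_splits (snd p)). f (fst p) * g (fst q) * h (snd q))"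
    unfolding ps_mult_eq_splits
    by (subst sum.Sigma[symmetric]) (auto simp: finite_mon_splits case_prod_beta sum_distrib_left mult.assoc intro!: sum.cong)
  show "ps_mult (ps_mult f g) h m = ps_mult f (ps_mult g h) m"
    unfolding L R
    by (rule sum.reindex_bij_witness[of _ "\<lambda>(p, q). ((fst p + fst q, snd q), (fst p, fst q))"
                                          "\<lambda>(p, q). ((fst q, snd q + snd p), (snd q, snd p))"])
       (auto simp: mon_splits_def add.assoc)
qed

lemma ps_mult_const: "ps_mult (ps_const c) f = (\<lambda>m. c * f m)" for f :: "'n::finite ps"
proof
  fix m :: "'n mon"
  have "ps_mult (ps_const c) f m = (\<Sum>a | a \<le> m. if a = 0 then c * f (m - a) else 0)"
    unfolding ps_mult_eq_le by (intro sum.cong) (auto simp: ps_const_def zero_fun_def)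
  also have "\<dots> = c * f m"
    using finite_mon_le[of m] by (simp add: le_fun_def[of 0 m])
  finally show "ps_mult (ps_const c) f m = c * f m" .
qed

lemma ps_mult_add: "ps_mult f (ps_add g h) = ps_add (ps_mult f g) (ps_mult f (h :: 'n::finite ps))"
  by (auto simp: ps_mult_eq_le ps_add_def fun_eq_iff distrib_left sum.distrib)

typedef (overloaded) ('n::finite) ser = "UNIV :: 'n ps set"
  morphisms coeff Abs_ser by auto

setup_lifting type_definition_ser

instantiation ser :: (finite) comm_ring_1
begin
lift_definition zero_ser :: "'a ser" is "\<lambda>m. 0" .
lift_definition one_ser :: "'a ser" is "ps_const 1" .
lift_definition plus_ser :: "'a ser \<Rightarrow> 'a ser \<Rightarrow> 'a ser" is ps_add .
lift_definition minus_ser :: "'a ser \<Rightarrow> 'a ser \<Rightarrow> 'a ser" is ps_diff .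
lift_definition uminus_ser :: "'a ser \<Rightarrow> 'a ser" is "\<lambda>f m. - f m" .
lift_definition times_ser :: "'a ser \<Rightarrow> 'a ser \<Rightarrow> 'a ser" is ps_mult .
instance
proof
  fix a b c :: "'a ser"
  show "a * b * c = a * (b * c)" by transfer (rule ps_mult_assoc)
  show "a * b = b * a" by transfer (rule ps_mult_commute)
  show "1 * a = a" by transfer (simp add: ps_mult_const)
  show "(a + b) * c = a * c + b * c" by transfer (metis ps_mult_add ps_mult_commute)
  show "a + b + c = a + (b + c)" by transfer (simp add: ps_add_def add.assoc)
  show "a + b = b + a" by transfer (simp add: ps_add_def add.commute)
  show "0 + a = a" by transfer (simp add: ps_add_def)
  show "- a + a = 0" by transfer (simp add: ps_add_def)
  show "a - b = a + - b" by transfer (simp add: ps_add_def ps_diff_def)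
  show "(0::'a ser) \<noteq> 1" by transfer (auto simp: ps_const_def fun_eq_iff)
qed
end

lemma ser_eqI: "(\<And>m. coeff f m = coeff g m) \<Longrightarrow> f = g"
  by (metis coeff_inject ext)

lemma coeff_add [simp]: "coeff (f + g) m = coeff f m + coeff g m"
  by (simp add: plus_ser.rep_eq ps_add_def)
lemma coeff_diff [simp]: "coeff (f - g) m = coeff f m - coeff g m"
  by (simp add: minus_ser.rep_eq ps_diff_def)
lemma coeff_uminus [simp]: "coeff (- f) m = - coeff f m"
  by (simp add: uminus_ser.rep_eq)
lemma coeff_0 [simp]: "coeff 0 m = 0"
  by (simp add: zero_ser.rep_eq)
lemma coeff_sum [simp]: "coeff (sum F S) m = (\<Sum>i\<in>S. coeff (F i) m)"
  by (induction S rule: infinite_finite_induct) auto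
lemma coeff_mult: "coeff (f * g) m = (\<Sum>a | a \<le> m. coeff f a * coeff g (m - a))"
  by (simp add: times_ser.rep_eq ps_mult_eq_le)
lemma coeff_mult_splits: "coeff (f * g) m = (\<Sum>(a, b)\<in>mon_splits m. coeff f a * coeff g b)"
  by (simp add: times_ser.rep_eq ps_mult_eq_splits)

lift_definition const_ser :: "complex \<Rightarrow> 'n::finite ser" is ps_const .
lift_definition monom :: "'n mon \<Rightarrow> 'n::finite ser" is "\<lambda>a m. if m = a then 1 else 0" .

lemma coeff_const_mult [simp]: "coeff (const_ser c * f) m = c * coeff f m"
  by (simp add: times_ser.rep_eq const_ser.rep_eq ps_mult_const)
lemma coeff_const: "coeff (const_ser c) m = (if m = 0 then c else 0)"
  by (simp add: const_ser.rep_eq ps_const_def zero_fun_def)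
lemma coeff_monom: "coeff (monom a) m = (if m = a then 1 else 0)"
  by (simp add: monom.rep_eq)
lemma coeff_monom_mult: "coeff (monom a * f) m = (if a \<le> m then coeff f (m - a) else 0)"
proof -
  have "coeff (monom a * f) m = (\<Sum>b | b \<le> m. if a = b then coeff f (m - b) else 0)"
    unfolding coeff_mult by (rule sum.cong) (auto simp: coeff_monom)
  then show ?thesis by (simp add: finite_mon_le)
qed

lemma const_ser_add: "const_ser (a + b) = const_ser a + const_ser b"
  by (rule ser_eqI) (simp add: coeff_const)
lemma const_ser_mult: "const_ser (a * b) = const_ser a * const_ser b"
  by (rule ser_eqI) (simp add: coeff_const)
lemma const_ser_uminus: "const_ser (- a) = - const_ser a"
  by (rule ser_eqI) (simp add: coeff_const)
lemma const_ser_0 [simp]: "const_ser 0 = 0"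
  by (rule ser_eqI) (simp add: coeff_const)
lemma const_ser_1 [simp]: "const_ser 1 = 1"
  by (rule ser_eqI) (simp add: coeff_const one_ser.rep_eq ps_const_def zero_fun_def)

lemma monom_mult: "monom a * monom b = monom (a + b)"
  by (rule ser_eqI) (auto simp: coeff_monom_mult coeff_monom mon_eq_add_iff)

definition unit_mon :: "'n var \<Rightarrow> 'n mon" where
  "unit_mon v = (\<lambda>w. if w = v then 1 else 0)"

definition var_ser :: "'n var \<Rightarrow> 'n::finite ser" where
  "var_ser v = monom (unit_mon v)"


section \<open>Formal derivatives and the Poisson bracket\<close>

lift_definition pdiff :: "'n var \<Rightarrow> 'n::finite ser \<Rightarrow> 'n ser" is ps_deriv .
lift_definition euler :: "'n var \<Rightarrow> 'n::finite ser \<Rightarrow> 'n ser" is "\<lambda>v f m. of_nat (m v) * f m" .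

lemma coeff_pdiff: "coeff (pdiff v f) m = of_nat (Suc (m v)) * coeff f (m(v := Suc (m v)))"
  by (simp add: pdiff.rep_eq ps_deriv_def)
lemma coeff_euler: "coeff (euler v f) m = of_nat (m v) * coeff f m"
  by (simp add: euler.rep_eq)

lemma pdiff_add [simp]: "pdiff v (f + g) = pdiff v f + pdiff v g"
  by (rule ser_eqI) (simp add: coeff_pdiff algebra_simps)
lemma pdiff_diff [simp]: "pdiff v (f - g) = pdiff v f - pdiff v g"
  by (rule ser_eqI) (simp add: coeff_pdiff algebra_simps)
lemma pdiff_uminus [simp]: "pdiff v (- f) = - pdiff v f"
  by (rule ser_eqI) (simp add: coeff_pdiff)
lemma pdiff_0 [simp]: "pdiff v 0 = 0"
  by (rule ser_eqI) (simp add: coeff_pdiff)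
lemma pdiff_sum [simp]: "pdiff v (sum F S) = (\<Sum>i\<in>S. pdiff v (F i))"
  by (rule ser_eqI) (simp add: coeff_pdiff sum_distrib_left)

lemma pdiff_const [simp]: "pdiff v (const_ser c) = 0"
proof -
  have "m(v := Suc k) \<noteq> 0" for m k
    by (metis fun_upd_same nat.distinct(1) zero_fun_def)
  then show ?thesis by (intro ser_eqI) (simp add: coeff_pdiff coeff_const)
qed

lemma pdiff_1 [simp]: "pdiff v 1 = 0"
  using pdiff_const[of v 1] by simp

lemma euler_mult: "euler v (f * g) = euler v f * g + f * euler v g"
proof (rule ser_eqI)
  fix m
  have "coeff (euler v (f * g)) m = (\<Sum>(a, b)\<in>mon_splits m. of_nat (m v) * (coeff f a * coeff g b))"
    by (simp add: coeff_euler coeff_mult_splits sum_distrib_left case_prod_beta)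
  also have "\<dots> = (\<Sum>(a, b)\<in>mon_splits m. of_nat (a v) * coeff f a * coeff g b + coeff f a * (of_nat (b v) * coeff g b))"
    by (rule sum.cong) (auto simp: mon_splits_def algebra_simps)
  also have "\<dots> = coeff (euler v f * g + f * euler v g) m"
    by (simp add: coeff_mult_splits coeff_euler sum.distrib case_prod_beta)
  finally show "coeff (euler v (f * g)) m = coeff (euler v f * g + f * euler v g) m" .
qed

lemma unit_mon_le_iff: "unit_mon v \<le> m \<longleftrightarrow> 1 \<le> m v"
  by (auto simp: unit_mon_def le_fun_def)

lemma var_mult_pdiff: "var_ser v * pdiff v f = euler v f"
proof (rule ser_eqI)
  fix m
  show "coeff (var_ser v * pdiff v f) m = coeff (euler v f) m"
  proof (cases "1 \<le> m v")
    case True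
    then have "(m - unit_mon v)(v := Suc ((m - unit_mon v) v)) = m" "Suc ((m - unit_mon v) v) = m v"
      by (auto simp: unit_mon_def fun_eq_iff)
    with True show ?thesis
      by (simp add: var_ser_def coeff_monom_mult unit_mon_le_iff coeff_pdiff coeff_euler)
  next
    case False
    then show ?thesis by (simp add: var_ser_def coeff_monom_mult unit_mon_le_iff coeff_euler)
  qed
qed

lemma var_mult_eq_0_iff: "var_ser v * h = 0 \<longleftrightarrow> h = 0"
proof
  assume h: "var_ser v * h = 0"
  show "h = 0"
  proof (rule ser_eqI)
    fix m
    have "unit_mon v \<le> m + unit_mon v" by (simp add: le_fun_def)
    then have "coeff (var_ser v * h) (m + unit_mon v) = coeff h m"
      by (simp add: var_ser_def coeff_monom_mult)
    with h show "coeff h m = coeff 0 m" by simp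
  qed
qed simp

text \<open>The Leibniz rule for \<open>\<partial>\<^sub>v\<close> is inherited from the coefficientwise obvious one for the
  Euler operator \<open>x\<^sub>v \<partial>\<^sub>v\<close>, since \<open>x\<^sub>v\<close> is not a zero divisor.\<close>

lemma pdiff_mult: "pdiff v (f * g) = pdiff v f * g + f * pdiff v g"
proof -
  have "var_ser v * (pdiff v (f * g) - (pdiff v f * g + f * pdiff v g)) = 0"
    by (simp add: right_diff_distrib distrib_left var_mult_pdiff euler_mult flip: mult.assoc)
       (simp add: mult.commute mult.left_commute var_mult_pdiff)
  then show ?thesis by (simp add: var_mult_eq_0_iff)
qed

lemma pdiff_const_mult [simp]: "pdiff v (const_ser c * f) = const_ser c * pdiff v f"
  by (simp add: pdiff_mult)

lemma pdiff_commute: "pdiff v (pdiff w f) = pdiff w (pdiff v f)"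
  by (rule ser_eqI) (cases "v = w", simp_all add: coeff_pdiff fun_upd_twist)

lemma pdiff_var: "pdiff v (var_ser w) = (if v = w then 1 else 0)"
proof (rule ser_eqI)
  fix m
  have "(m(v := Suc (m v)) = unit_mon w) = (v = w \<and> m = 0)"
    by (auto simp: unit_mon_def fun_eq_iff split: if_splits)
  then show "coeff (pdiff v (var_ser w)) m = coeff (if v = w then 1 else 0) m"
    by (auto simp: coeff_pdiff var_ser_def coeff_monom one_ser.rep_eq ps_const_def zero_fun_def)
qed

definition pbr :: "'n::finite ser \<Rightarrow> 'n ser \<Rightarrow> 'n ser" where
  "pbr f g = (\<Sum>i\<in>UNIV. pdiff (Qv i) f * pdiff (Pv i) g - pdiff (Pv i) f * pdiff (Qv i) g)"

lemma pbr_add_left: "pbr (f + g) h = pbr f h + pbr g h"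
  unfolding pbr_def sum.distrib[symmetric] by (intro sum.cong refl) (simp add: algebra_simps)
lemma pbr_add_right: "pbr h (f + g) = pbr h f + pbr h g"
  unfolding pbr_def sum.distrib[symmetric] by (intro sum.cong refl) (simp add: algebra_simps)
lemma pbr_diff_left: "pbr (f - g) h = pbr f h - pbr g h"
  unfolding pbr_def sum_subtractf[symmetric] by (intro sum.cong refl) (simp add: algebra_simps)
lemma pbr_diff_right: "pbr h (f - g) = pbr h f - pbr h g"
  unfolding pbr_def sum_subtractf[symmetric] by (intro sum.cong refl) (simp add: algebra_simps)
lemma pbr_uminus_left: "pbr (- f) h = - pbr f h"
  unfolding pbr_def sum_negf[symmetric] by (intro sum.cong refl) (simp add: algebra_simps)
lemma pbr_0_right [simp]: "pbr h 0 = 0"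
  by (simp add: pbr_def)
lemma pbr_sum_right: "pbr h (sum F S) = (\<Sum>k\<in>S. pbr h (F k))"
  by (induction S rule: infinite_finite_induct) (auto simp: pbr_add_right)
lemma pbr_const_mult_left: "pbr (const_ser c * f) h = const_ser c * pbr f h"
  unfolding pbr_def pdiff_const_mult sum_distrib_left by (intro sum.cong refl) (simp add: algebra_simps)
lemma pbr_const_mult_right: "pbr h (const_ser c * f) = const_ser c * pbr h f"
  unfolding pbr_def pdiff_const_mult sum_distrib_left by (intro sum.cong refl) (simp add: algebra_simps)
lemma pbr_antisym: "pbr f g = - pbr g f"
  unfolding pbr_def sum_negf[symmetric] by (intro sum.cong refl) (simp add: algebra_simps)

lemma pbr_mult_right: "pbr f (g * h) = pbr f g * h + g * pbr f h"
proof -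
  have "pbr f (g * h) = (\<Sum>i\<in>UNIV. (pdiff (Qv i) f * pdiff (Pv i) g - pdiff (Pv i) f * pdiff (Qv i) g) * h
        + g * (pdiff (Qv i) f * pdiff (Pv i) h - pdiff (Pv i) f * pdiff (Qv i) h))"
    unfolding pbr_def pdiff_mult by (intro sum.cong refl) (simp add: algebra_simps)
  also have "\<dots> = pbr f g * h + g * pbr f h"
    by (simp add: pbr_def sum.distrib sum_distrib_left sum_distrib_right)
  finally show ?thesis .
qed

definition jacobi_term :: "'n::finite ser \<Rightarrow> 'n ser \<Rightarrow> 'n ser \<Rightarrow> 'n \<Rightarrow> 'n \<Rightarrow> 'n ser" where
  "jacobi_term f g h i j =
     pdiff (Qv i) f * (pdiff (Pv i) (pdiff (Qv j) g) * pdiff (Pv j) h + pdiff (Qv j) g * pdiff (Pv i) (pdiff (Pv j) h)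
       - (pdiff (Pv i) (pdiff (Pv j) g) * pdiff (Qv j) h + pdiff (Pv j) g * pdiff (Pv i) (pdiff (Qv j) h)))
   - pdiff (Pv i) f * (pdiff (Qv i) (pdiff (Qv j) g) * pdiff (Pv j) h + pdiff (Qv j) g * pdiff (Qv i) (pdiff (Pv j) h)
       - (pdiff (Qv i) (pdiff (Pv j) g) * pdiff (Qv j) h + pdiff (Pv j) g * pdiff (Qv i) (pdiff (Qv j) h)))"

lemma pbr_pbr: "pbr f (pbr g h) = (\<Sum>i\<in>UNIV. \<Sum>j\<in>UNIV. jacobi_term f g h i j)"
  unfolding pbr_def[of f] pbr_def[of g] pdiff_sum pdiff_diff pdiff_mult sum_distrib_left
    sum_subtractf[symmetric] jacobi_term_def ..

lemma ser_double_eq_0: "(x :: 'n::finite ser) + x = 0 \<Longrightarrow> x = 0"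
proof (rule ser_eqI)
  fix m assume "x + x = 0"
  then have "coeff x m + coeff x m = 0" by (metis coeff_0 coeff_add)
  then show "coeff x m = coeff 0 m" by simp
qed

lemma double_sum_antisym_eq_0:
  assumes "\<And>i j. S i j + S j i = 0"
  shows "(\<Sum>i\<in>UNIV. \<Sum>j\<in>UNIV. S i j) = (0 :: 'n::finite ser)"
proof (rule ser_double_eq_0)
  have "(\<Sum>i\<in>UNIV. \<Sum>j\<in>UNIV. S i j) + (\<Sum>i\<in>UNIV. \<Sum>j\<in>UNIV. S i j)
     = (\<Sum>i\<in>UNIV. \<Sum>j\<in>UNIV. S i j) + (\<Sum>i\<in>UNIV. \<Sum>j\<in>UNIV. S j i)"
    by (subst (3) sum.swap) rule
  also have "\<dots> = (\<Sum>i\<in>UNIV. \<Sum>j\<in>UNIV. S i j + S j i)"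
    by (simp add: sum.distrib)
  finally show "(\<Sum>i\<in>UNIV. \<Sum>j\<in>UNIV. S i j) + (\<Sum>i\<in>UNIV. \<Sum>j\<in>UNIV. S i j) = 0"
    by (simp add: assms)
qed

lemma pbr_jacobi: "pbr f (pbr g h) = pbr (pbr f g) h + pbr g (pbr f h)"
proof -
  have "pbr f (pbr g h) + pbr h (pbr f g) - pbr g (pbr f h) = 0"
    unfolding pbr_pbr sum_subtractf[symmetric] sum.distrib[symmetric]
    by (rule double_sum_antisym_eq_0) (simp add: jacobi_term_def pdiff_commute algebra_simps)
  then show ?thesis by (simp add: pbr_antisym[of "pbr f g" h] algebra_simps)
qed


section \<open>Weighted degree, order and homogeneous parts\<close>

definition var_weight :: "'n var \<Rightarrow> nat" where
  "var_weight v = (case v of Lam _ \<Rightarrow> 2 | _ \<Rightarrow> 1)"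

definition wdeg :: "'n::finite mon \<Rightarrow> nat" where
  "wdeg m = (\<Sum>v\<in>UNIV. var_weight v * m v)"

lemma var_weight_ge_1: "1 \<le> var_weight v"
  by (cases v) (auto simp: var_weight_def)

lemma wdeg_add: "wdeg (a + b) = wdeg a + wdeg b"
  by (simp add: wdeg_def algebra_simps sum.distrib)

lemma wdeg_unit_mon: "wdeg (unit_mon v) = var_weight v"
proof -
  have "wdeg (unit_mon v) = (\<Sum>w\<in>UNIV. if w = v then var_weight w else 0)"
    unfolding wdeg_def unit_mon_def by (rule sum.cong) auto
  then show ?thesis by simp
qed

lemma wdeg_upd_Suc: "wdeg (m(v := Suc (m v))) = wdeg m + var_weight v"
proof -
  have "m(v := Suc (m v)) = m + unit_mon v" by (auto simp: unit_mon_def fun_eq_iff)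
  then show ?thesis by (simp add: wdeg_add wdeg_unit_mon)
qed

lemma le_wdeg: "m v \<le> wdeg m"
proof -
  have "m v \<le> var_weight v * m v" using var_weight_ge_1[of v] by simp
  also have "\<dots> \<le> wdeg m" unfolding wdeg_def by (rule member_le_sum) auto
  finally show ?thesis .
qed

lemma finite_wdeg_eq: "finite {m :: 'n::finite mon. wdeg m = d}"
proof (rule finite_subset[OF _ finite_mon_le[of "\<lambda>_. d"]])
  show "{m :: 'n mon. wdeg m = d} \<subseteq> {a. a \<le> (\<lambda>_. d)}"
    using le_wdeg by (fastforce simp: le_fun_def)
qed

lemma mon_deg_eq_wdeg: "mon_deg m = wdeg m"
proof -
  have "wdeg m = (\<Sum>v\<in>range Lam. var_weight v * m v) + (\<Sum>v\<in>range Qv. var_weight v * m v)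
      + (\<Sum>v\<in>range Pv. var_weight v * m v)"
    unfolding wdeg_def UNIV_var by (subst sum.union_disjoint, auto)+
  also have "\<dots> = (\<Sum>i\<in>UNIV. 2 * m (Lam i)) + (\<Sum>i\<in>UNIV. m (Qv i)) + (\<Sum>i\<in>UNIV. m (Pv i))"
    by (simp add: sum.reindex inj_on_def var_weight_def)
  also have "\<dots> = mon_deg m" by (simp add: mon_deg_def sum.distrib)
  finally show ?thesis by simp
qed

definition ord_ge :: "nat \<Rightarrow> 'n::finite ser \<Rightarrow> bool" where
  "ord_ge r f \<longleftrightarrow> (\<forall>m. wdeg m < r \<longrightarrow> coeff f m = 0)"

lemma ord_geD: "ord_ge r f \<Longrightarrow> wdeg m < r \<Longrightarrow> coeff f m = 0"
  by (simp add: ord_ge_def)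
lemma ord_ge_0 [simp]: "ord_ge 0 f"
  by (simp add: ord_ge_def)
lemma ord_ge_zero [simp]: "ord_ge r 0"
  by (simp add: ord_ge_def)
lemma ord_ge_mono: "ord_ge r f \<Longrightarrow> r' \<le> r \<Longrightarrow> ord_ge r' f"
  by (simp add: ord_ge_def)
lemma ord_ge_add: "ord_ge r f \<Longrightarrow> ord_ge r g \<Longrightarrow> ord_ge r (f + g)"
  by (simp add: ord_ge_def)
lemma ord_ge_diff: "ord_ge r f \<Longrightarrow> ord_ge r g \<Longrightarrow> ord_ge r (f - g)"
  by (simp add: ord_ge_def)
lemma ord_ge_uminus_iff [simp]: "ord_ge r (- f) = ord_ge r f"
  by (simp add: ord_ge_def)
lemma ord_ge_sum: "(\<And>i. i \<in> S \<Longrightarrow> ord_ge r (F i)) \<Longrightarrow> ord_ge r (sum F S)"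
  by (simp add: ord_ge_def)
lemma ord_ge_const_mult: "ord_ge r f \<Longrightarrow> ord_ge r (const_ser c * f)"
  by (simp add: ord_ge_def)

lemma ord_ge_mult:
  fixes f g :: "'n::finite ser"
  assumes f: "ord_ge r f" and g: "ord_ge s g"
  shows "ord_ge (r + s) (f * g)"
  unfolding ord_ge_def
proof (intro allI impI)
  fix m :: "'n mon" assume m: "wdeg m < r + s"
  have "coeff f a * coeff g b = 0" if "(a, b) \<in> mon_splits m" for a b
  proof -
    from that m have "wdeg a < r \<or> wdeg b < s" by (auto simp: mon_splits_def wdeg_add)
    then show ?thesis using f g by (auto simp: ord_ge_def)
  qed
  then show "coeff (f * g) m = 0" unfolding coeff_mult_splits by (intro sum.neutral) auto
qed

lemma ord_ge_pdiff: "ord_ge r f \<Longrightarrow> ord_ge (r - var_weight v) (pdiff v f)"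
  by (simp add: ord_ge_def coeff_pdiff wdeg_upd_Suc)

lemma ord_ge_pbr: "ord_ge r f \<Longrightarrow> ord_ge s g \<Longrightarrow> ord_ge (r + s - 2) (pbr f g)"
  unfolding pbr_def
  by (intro ord_ge_sum ord_ge_diff; rule ord_ge_mono[OF ord_ge_mult[OF ord_ge_pdiff ord_ge_pdiff]])
     (auto simp: var_weight_def)

definition homog :: "nat \<Rightarrow> 'n::finite ser \<Rightarrow> bool" where
  "homog d f \<longleftrightarrow> (\<forall>m. wdeg m \<noteq> d \<longrightarrow> coeff f m = 0)"

lemma homog_zero [simp]: "homog d 0"
  by (simp add: homog_def)
lemma homog_add: "homog d f \<Longrightarrow> homog d g \<Longrightarrow> homog d (f + g)"
  by (simp add: homog_def)
lemma homog_sum: "(\<And>i. i \<in> S \<Longrightarrow> homog d (F i)) \<Longrightarrow> homog d (sum F S)"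
  by (simp add: homog_def)
lemma homog_const_mult: "homog d f \<Longrightarrow> homog d (const_ser c * f)"
  by (simp add: homog_def)
lemma homog_imp_ord_ge: "homog d f \<Longrightarrow> ord_ge d f"
  by (simp add: homog_def ord_ge_def)
lemma homog_monom: "homog (wdeg a) (monom a)"
  by (simp add: homog_def coeff_monom)

lift_definition hpart :: "nat \<Rightarrow> 'n::finite ser \<Rightarrow> 'n ser" is
  "\<lambda>d f m. if wdeg m = d then f m else 0" .

lemma coeff_hpart: "coeff (hpart d f) m = (if wdeg m = d then coeff f m else 0)"
  by (simp add: hpart.rep_eq)
lemma homog_hpart: "homog d (hpart d f)"
  by (simp add: homog_def coeff_hpart)

lemma hpart_eq_monom_sum: "hpart d f = (\<Sum>m | wdeg m = d. const_ser (coeff f m) * monom m)"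
proof (rule ser_eqI)
  fix k
  have "coeff (\<Sum>m | wdeg m = d. const_ser (coeff f m) * monom m) k
      = (\<Sum>m | wdeg m = d. if k = m then coeff f m else 0)"
    unfolding coeff_sum coeff_const_mult coeff_monom by (rule sum.cong) auto
  also have "\<dots> = coeff (hpart d f) k"
    by (simp add: coeff_hpart finite_wdeg_eq)
  finally show "coeff (hpart d f) k = coeff (\<Sum>m | wdeg m = d. const_ser (coeff f m) * monom m) k" ..
qed

section \<open>Sums of series of increasing order\<close>

text \<open>A coefficientwise sum, meaningful only when each coefficient receives finitely many non-zero
  contributions; this is guaranteed by \<open>ord_summable\<close>.\<close>

lift_definition ssum :: "(nat \<Rightarrow> 'n::finite ser) \<Rightarrow> 'n ser" is
  "\<lambda>F m. \<Sum>k | F k m \<noteq> 0. F k m" .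

definition ord_summable :: "(nat \<Rightarrow> 'n::finite ser) \<Rightarrow> bool" where
  "ord_summable F \<longleftrightarrow> (\<forall>r. \<exists>K. \<forall>k>K. ord_ge r (F k))"

lemma coeff_ssum_eq_sum:
  "(\<And>k. N < k \<Longrightarrow> coeff (F k) m = 0) \<Longrightarrow> coeff (ssum F) m = (\<Sum>k\<le>N. coeff (F k) m)"
  unfolding ssum.rep_eq by (rule sum.mono_neutral_left) (auto simp: not_le[symmetric])

lemma ord_summableD: "ord_summable F \<Longrightarrow> \<exists>K. \<forall>k>K. ord_ge r (F k)"
  by (simp add: ord_summable_def)

lemma ord_summableI: "(\<And>k. ord_ge (k - c) (F k)) \<Longrightarrow> ord_summable F"
  unfolding ord_summable_def
proof
  fix r assume F: "\<And>k. ord_ge (k - c) (F k)"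
  have "ord_ge r (F k)" if "r + c < k" for k
    by (rule ord_ge_mono[OF F[of k]]) (use that in simp)
  then show "\<exists>K. \<forall>k>K. ord_ge r (F k)" by blast
qed

lemma ord_summable_homog: "(\<And>d. homog (d - c) (F d)) \<Longrightarrow> ord_summable F"
  by (rule ord_summableI) (rule homog_imp_ord_ge)

lemma ord_summable_add: "ord_summable F \<Longrightarrow> ord_summable G \<Longrightarrow> ord_summable (\<lambda>k. F k + G k)"
  unfolding ord_summable_def by (metis ord_ge_add max.strict_boundedE less_max_iff_disj)

lemma ord_summable_uminus: "ord_summable F \<Longrightarrow> ord_summable (\<lambda>k. - F k)"
  by (simp add: ord_summable_def)

lemma ord_summable_diff: "ord_summable F \<Longrightarrow> ord_summable G \<Longrightarrow> ord_summable (\<lambda>k. F k - G k)"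
  using ord_summable_add[of F "\<lambda>k. - G k"] ord_summable_uminus[of G] by simp

lemma ord_summable_sum: "(\<And>i. i \<in> S \<Longrightarrow> ord_summable (F i)) \<Longrightarrow> ord_summable (\<lambda>k. \<Sum>i\<in>S. F i k)"
proof (induction S rule: infinite_finite_induct)
  case (insert x S)
  then show ?case by (simp add: ord_summable_add)
qed (simp_all add: ord_summable_def)

lemma ord_summable_mult_right: "ord_summable G \<Longrightarrow> ord_summable (\<lambda>k. G k * g)"
  unfolding ord_summable_def using ord_ge_mult[of _ _ 0 g] by (metis add_0_right ord_ge_0)

lemma ssum_add:
  fixes F G :: "nat \<Rightarrow> 'n::finite ser"
  assumes F: "ord_summable F" and G: "ord_summable G"
  shows "ssum (\<lambda>k. F k + G k) = ssum F + ssum G"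
proof (rule ser_eqI)
  fix m :: "'n mon"
  obtain K1 where K1: "\<forall>k>K1. ord_ge (Suc (wdeg m)) (F k)" using ord_summableD[OF F] by blast
  obtain K2 where K2: "\<forall>k>K2. ord_ge (Suc (wdeg m)) (G k)" using ord_summableD[OF G] by blast
  let ?N = "max K1 K2"
  have zF: "coeff (F k) m = 0" and zG: "coeff (G k) m = 0" if "?N < k" for k
    using K1 K2 that by (auto intro: ord_geD)
  show "coeff (ssum (\<lambda>k. F k + G k)) m = coeff (ssum F + ssum G) m"
    using coeff_ssum_eq_sum[of ?N "\<lambda>k. F k + G k" m] coeff_ssum_eq_sum[of ?N F m]
      coeff_ssum_eq_sum[of ?N G m] zF zG
    by (simp add: sum.distrib)
qed

lemma ssum_zero [simp]: "ssum (\<lambda>k. 0) = 0"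
  by (rule ser_eqI) (simp add: ssum.rep_eq)

lemma ssum_uminus: "ssum (\<lambda>k. - F k) = - ssum F"
  by (rule ser_eqI) (simp add: ssum.rep_eq sum_negf)

lemma ssum_diff: "ord_summable F \<Longrightarrow> ord_summable G \<Longrightarrow> ssum (\<lambda>k. F k - G k) = ssum F - ssum G"
  using ssum_add[of F "\<lambda>k. - G k"] by (simp add: ord_summable_uminus ssum_uminus)

lemma ssum_sum: "(\<And>i. i \<in> S \<Longrightarrow> ord_summable (F i)) \<Longrightarrow> ssum (\<lambda>k. \<Sum>i\<in>S. F i k) = (\<Sum>i\<in>S. ssum (F i))"
proof (induction S rule: infinite_finite_induct)
  case (insert x S)
  then show ?case by (simp add: ssum_add ord_summable_sum)
qed simp_all

lemma ord_ge_ssum: "(\<And>k. ord_ge r (F k)) \<Longrightarrow> ord_ge r (ssum F)"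
  by (simp add: ord_ge_def ssum.rep_eq)

lemma ssum_finite: "(\<And>k. N < k \<Longrightarrow> F k = 0) \<Longrightarrow> ssum F = (\<Sum>k\<le>N. F k)"
  by (rule ser_eqI) (simp add: coeff_ssum_eq_sum[of N])

lemma ssum_split:
  assumes "ord_summable F"
  shows "ssum F = (\<Sum>k\<le>N. F k) + ssum (\<lambda>k. if k \<le> N then 0 else F k)"
proof -
  have head: "ord_summable (\<lambda>k. if k \<le> N then F k else 0)"
    unfolding ord_summable_def by (metis leD ord_ge_zero)
  have tail: "ord_summable (\<lambda>k. if k \<le> N then 0 else F k)"
    using ord_summableD[OF assms] unfolding ord_summable_def by (metis ord_ge_zero)
  have "ssum F = ssum (\<lambda>k. (if k \<le> N then F k else 0) + (if k \<le> N then 0 else F k))"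
    by (intro arg_cong[where f = ssum] ext) simp
  also have "\<dots> = ssum (\<lambda>k. if k \<le> N then F k else 0) + ssum (\<lambda>k. if k \<le> N then 0 else F k)"
    by (rule ssum_add[OF head tail])
  also have "ssum (\<lambda>k. if k \<le> N then F k else 0) = (\<Sum>k\<le>N. F k)"
    by (subst ssum_finite[of N]) auto
  finally show ?thesis .
qed

lemma ssum_mult_right:
  fixes G :: "nat \<Rightarrow> 'n::finite ser"
  assumes G: "ord_summable G"
  shows "ssum G * g = ssum (\<lambda>k. G k * g)"
proof (rule ser_eqI)
  fix m :: "'n mon"
  obtain N where N: "\<forall>k>N. ord_ge (Suc (wdeg m)) (G k)"
    using ord_summableD[OF G] by blast
  let ?T = "ssum (\<lambda>k. if k \<le> N then 0 else G k)"
  have "ord_ge (Suc (wdeg m)) ?T"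
    by (rule ord_ge_ssum) (use N in auto)
  then have "ord_ge (Suc (wdeg m)) (?T * g)"
    using ord_ge_mult[of _ ?T 0 g] by simp
  moreover have "ssum G * g = (\<Sum>k\<le>N. G k * g) + ?T * g"
    by (subst ssum_split[OF G, of N]) (simp add: sum_distrib_right distrib_right)
  ultimately have "coeff (ssum G * g) m = (\<Sum>k\<le>N. coeff (G k * g) m)"
    by (simp add: ord_geD)
  moreover have "coeff (ssum (\<lambda>k. G k * g)) m = (\<Sum>k\<le>N. coeff (G k * g) m)"
  proof (rule coeff_ssum_eq_sum)
    fix k assume "N < k"
    then have "ord_ge (Suc (wdeg m)) (G k * g)"
      using N ord_ge_mult[of _ "G k" 0 g] by simp
    then show "coeff (G k * g) m = 0" by (simp add: ord_geD)
  qed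
  ultimately show "coeff (ssum G * g) m = coeff (ssum (\<lambda>k. G k * g)) m" by simp
qed

lemma ssum_hpart: "ssum (\<lambda>d. hpart d f) = f"
proof (rule ser_eqI)
  fix m
  show "coeff (ssum (\<lambda>d. hpart d f)) m = coeff f m"
    by (subst coeff_ssum_eq_sum[of "wdeg m"]) (auto simp: coeff_hpart)
qed


section \<open>The Lie exponential\<close>

text \<open>\<open>lie_exp F\<close> is \<open>exp(ad F) = \<Sum>\<^sub>k (ad F)\<^sup>k / k!\<close>, the time-one map of the Hamiltonian flow of \<open>F\<close>.
  For \<open>ord_ge 3 F\<close> the operator \<open>ad F = pbr F\<close> raises the order by one, so the series converges.\<close>

definition lie_term :: "'n::finite ser \<Rightarrow> 'n ser \<Rightarrow> nat \<Rightarrow> 'n ser" where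
  "lie_term F X k = const_ser (1 / fact k) * (pbr F ^^ k) X"

definition lie_exp :: "'n::finite ser \<Rightarrow> 'n ser \<Rightarrow> 'n ser" where
  "lie_exp F X = ssum (lie_term F X)"

lemma ord_ge_pbr_Suc: "ord_ge 3 F \<Longrightarrow> ord_ge r X \<Longrightarrow> ord_ge (Suc r) (pbr F X)"
  using ord_ge_pbr[of 3 F r X] by simp

lemma ord_ge_pbr_iter: "ord_ge 3 F \<Longrightarrow> ord_ge r X \<Longrightarrow> ord_ge (r + k) ((pbr F ^^ k) X)"
  by (induction k) (auto simp: ord_ge_pbr_Suc)

lemma ord_ge_lie_term: "ord_ge 3 F \<Longrightarrow> ord_ge k (lie_term F X k)"
  unfolding lie_term_def using ord_ge_pbr_iter[of F 0 X k] by (simp add: ord_ge_const_mult)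

lemma ord_summable_lie_term: "ord_ge 3 F \<Longrightarrow> ord_summable (lie_term F X)"
  by (rule ord_summableI[where c = 0]) (simp add: ord_ge_lie_term)

lemma pbr_iter_add: "(pbr F ^^ k) (X + Y) = (pbr F ^^ k) X + (pbr F ^^ k) Y"
  by (induction k) (auto simp: pbr_add_right)
lemma pbr_iter_const_mult: "(pbr F ^^ k) (const_ser c * X) = const_ser c * (pbr F ^^ k) X"
  by (induction k) (auto simp: pbr_const_mult_right)
lemma pbr_iter_sum: "(pbr F ^^ k) (sum G S) = (\<Sum>i\<in>S. (pbr F ^^ k) (G i))"
  by (induction k) (auto simp: pbr_sum_right)

lemma pbr_iter_uminus: "(pbr (- F) ^^ k) Y = const_ser ((-1) ^ k) * (pbr F ^^ k) Y"
proof (induction k)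
  case (Suc k)
  have "pbr (- F) (const_ser ((-1) ^ k) * (pbr F ^^ k) Y) = const_ser (- ((-1) ^ k)) * pbr F ((pbr F ^^ k) Y)"
    by (simp add: pbr_uminus_left pbr_const_mult_right const_ser_uminus)
  then show ?case by (simp add: Suc)
qed simp

lemma lie_term_add: "lie_term F (X + Y) k = lie_term F X k + lie_term F Y k"
  by (simp add: lie_term_def pbr_iter_add distrib_left)

lemma lie_exp_add: "ord_ge 3 F \<Longrightarrow> lie_exp F (X + Y) = lie_exp F X + lie_exp F Y"
  unfolding lie_exp_def lie_term_add by (rule ssum_add) (auto intro: ord_summable_lie_term)

lemma coeff_lie_exp:
  "ord_ge 3 F \<Longrightarrow> wdeg m \<le> N \<Longrightarrow> coeff (lie_exp F X) m = (\<Sum>k\<le>N. coeff (lie_term F X k) m)"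
  unfolding lie_exp_def by (rule coeff_ssum_eq_sum) (auto intro: ord_geD[OF ord_ge_lie_term])

lemma ord_ge_lie_exp_remainder:
  assumes "ord_ge 3 F"
  shows "ord_ge (Suc N) (lie_exp F X - (\<Sum>k\<le>N. lie_term F X k))"
  unfolding ord_ge_def by (auto simp: coeff_lie_exp[OF assms, where N = N])

lemma lie_exp_fixed: "pbr F X = 0 \<Longrightarrow> lie_exp F X = X"
proof -
  assume X: "pbr F X = 0"
  have "(pbr F ^^ Suc k) X = 0" for k by (induction k) (auto simp: X)
  then have "lie_term F X k = 0" if "0 < k" for k using that by (cases k) (auto simp: lie_term_def)
  then have "lie_exp F X = (\<Sum>k\<le>0. lie_term F X k)" unfolding lie_exp_def by (intro ssum_finite) auto
  then show ?thesis by (simp add: lie_term_def)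
qed

lemma pbr_lie_term: "pbr F (lie_term F X i) = const_ser (of_nat (Suc i)) * lie_term F X (Suc i)"
proof -
  have "pbr F (lie_term F X i) = const_ser (1 / fact i) * (pbr F ^^ Suc i) X"
    by (simp add: lie_term_def pbr_const_mult_right)
  also have "const_ser (1 / fact i) = const_ser (of_nat (Suc i)) * const_ser (1 / fact (Suc i))"
  proof -
    have "(1 / fact i :: complex) = of_nat (Suc i) * (1 / fact (Suc i))"
      by (simp only: fact_Suc) (simp add: field_simps del: of_nat_Suc)
    then show ?thesis by (simp add: const_ser_mult[symmetric] del: of_nat_Suc)
  qed
  finally show ?thesis by (simp add: lie_term_def mult.assoc)
qed

lemma const_ser_mult_assoc: "const_ser a * (const_ser b * Y) = const_ser (a * b) * Y"
  by (simp add: const_ser_mult mult.assoc)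

lemma lie_term_Suc: "lie_term F X (Suc i) = const_ser (1 / of_nat (Suc i)) * pbr F (lie_term F X i)"
  by (simp add: pbr_lie_term const_ser_mult_assoc del: of_nat_Suc)

lemma sum_square_eq_sum_triangle:
  fixes g :: "nat \<Rightarrow> nat \<Rightarrow> 'a::comm_monoid_add"
  assumes "\<And>a b. N < a + b \<Longrightarrow> g a b = 0"
  shows "(\<Sum>a\<le>N. \<Sum>b\<le>N. g a b) = (\<Sum>n\<le>N. \<Sum>a\<le>n. g a (n - a))"
proof -
  have "(\<Sum>a\<le>N. \<Sum>b\<le>N. g a b) = (\<Sum>(a, b)\<in>{..N} \<times> {..N}. g a b)"
    by (simp add: sum.cartesian_product)
  also have "\<dots> = (\<Sum>(a, b)\<in>{(a, b). a + b \<le> N}. g a b)"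
    by (rule sum.mono_neutral_right) (auto, metis assms not_le)
  also have "\<dots> = (\<Sum>n\<le>N. \<Sum>a\<le>n. g a (n - a))"
    by (rule sum.triangle_reindex_eq)
  finally show ?thesis .
qed

text \<open>Instances are the product and, by the Jacobi identity, the Poisson bracket.\<close>

locale graded_bilinear =
  fixes B :: "'n::finite ser \<Rightarrow> 'n ser \<Rightarrow> 'n ser" and c :: nat
  assumes add_left: "B (x + y) z = B x z + B y z"
    and add_right: "B z (x + y) = B z x + B z y"
    and const_mult_left: "B (const_ser a * x) y = const_ser a * B x y"
    and const_mult_right: "B x (const_ser a * y) = const_ser a * B x y"
    and ord_ge_B: "ord_ge r x \<Longrightarrow> ord_ge s y \<Longrightarrow> ord_ge (r + s - c) (B x y)"
begin

lemma zero_left [simp]: "B 0 y = 0"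
  by (metis add_left add_cancel_right_right add_0)
lemma zero_right [simp]: "B y 0 = 0"
  by (metis add_right add_cancel_right_right add_0)
lemma sum_left: "B (sum G S) y = (\<Sum>i\<in>S. B (G i) y)"
  by (induction S rule: infinite_finite_induct) (auto simp: add_left)
lemma sum_right: "B y (sum G S) = (\<Sum>i\<in>S. B y (G i))"
  by (induction S rule: infinite_finite_induct) (auto simp: add_right)

lemma leibniz_sum_Suc:
  fixes x y :: "nat \<Rightarrow> 'n ser"
  shows "(\<Sum>i\<le>n. const_ser (of_nat (Suc i)) * B (x (Suc i)) (y (n - i))
        + const_ser (of_nat (Suc (n - i))) * B (x i) (y (Suc (n - i))))
      = const_ser (of_nat (Suc n)) * (\<Sum>i\<le>Suc n. B (x i) (y (Suc n - i)))"
proof -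
  have first: "(\<Sum>i\<le>n. const_ser (of_nat (Suc i)) * B (x (Suc i)) (y (n - i)))
      = (\<Sum>i\<le>Suc n. const_ser (of_nat i) * B (x i) (y (Suc n - i)))"
    by (subst sum.atMost_Suc_shift) simp
  have "(\<Sum>i\<le>Suc n. const_ser (of_nat (Suc n - i)) * B (x i) (y (Suc n - i)))
      = (\<Sum>i\<le>n. const_ser (of_nat (Suc n - i)) * B (x i) (y (Suc n - i)))"
    by (simp only: sum.atMost_Suc) simp
  also have "\<dots> = (\<Sum>i\<le>n. const_ser (of_nat (Suc (n - i))) * B (x i) (y (Suc (n - i))))"
    by (rule sum.cong[OF refl]) (simp only: Suc_diff_le atMost_iff)
  finally have second: "(\<Sum>i\<le>n. const_ser (of_nat (Suc (n - i))) * B (x i) (y (Suc (n - i))))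
      = (\<Sum>i\<le>Suc n. const_ser (of_nat (Suc n - i)) * B (x i) (y (Suc n - i)))" ..
  have "(\<Sum>i\<le>n. const_ser (of_nat (Suc i)) * B (x (Suc i)) (y (n - i))
        + const_ser (of_nat (Suc (n - i))) * B (x i) (y (Suc (n - i))))
      = (\<Sum>i\<le>Suc n. const_ser (of_nat i) * B (x i) (y (Suc n - i))
        + const_ser (of_nat (Suc n - i)) * B (x i) (y (Suc n - i)))"
    by (simp only: sum.distrib first second)
  also have "\<dots> = (\<Sum>i\<le>Suc n. const_ser (of_nat (Suc n)) * B (x i) (y (Suc n - i)))"
  proof (rule sum.cong[OF refl])
    fix i assume "i \<in> {..Suc n}"
    then have "of_nat i + of_nat (Suc n - i) = (of_nat (Suc n) :: complex)"
      by (simp flip: of_nat_add)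
    then show "const_ser (of_nat i) * B (x i) (y (Suc n - i))
        + const_ser (of_nat (Suc n - i)) * B (x i) (y (Suc n - i))
        = const_ser (of_nat (Suc n)) * B (x i) (y (Suc n - i))"
      by (metis const_ser_add distrib_right)
  qed
  finally show ?thesis by (simp only: sum_distrib_left)
qed

lemma lie_term_leibniz:
  assumes derivation: "\<And>x y. pbr F (B x y) = B (pbr F x) y + B x (pbr F y)"
  shows "lie_term F (B x y) n = (\<Sum>i\<le>n. B (lie_term F x i) (lie_term F y (n - i)))"
proof (induction n)
  case 0
  then show ?case by (simp add: lie_term_def)
next
  case (Suc n)
  have "lie_term F (B x y) (Suc n)
      = const_ser (1 / of_nat (Suc n)) * pbr F (\<Sum>i\<le>n. B (lie_term F x i) (lie_term F y (n - i)))"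
    by (simp only: lie_term_Suc Suc)
  also have "pbr F (\<Sum>i\<le>n. B (lie_term F x i) (lie_term F y (n - i)))
     = (\<Sum>i\<le>n. const_ser (of_nat (Suc i)) * B (lie_term F x (Suc i)) (lie_term F y (n - i))
        + const_ser (of_nat (Suc (n - i))) * B (lie_term F x i) (lie_term F y (Suc (n - i))))"
    by (simp only: pbr_sum_right derivation pbr_lie_term const_mult_left const_mult_right)
  also have "\<dots> = const_ser (of_nat (Suc n)) * (\<Sum>i\<le>Suc n. B (lie_term F x i) (lie_term F y (Suc n - i)))"
    by (rule leibniz_sum_Suc)
  finally show ?case by (simp add: const_ser_mult_assoc del: of_nat_Suc)
qed

lemma lie_exp_leibniz:
  assumes F: "ord_ge 3 F" and derivation: "\<And>x y. pbr F (B x y) = B (pbr F x) y + B x (pbr F y)"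
  shows "lie_exp F (B x y) = B (lie_exp F x) (lie_exp F y)"
proof (rule ser_eqI)
  fix m :: "'n mon"
  define N where "N = wdeg m + c"
  define Sx Sy where "Sx = (\<Sum>k\<le>N. lie_term F x k)" and "Sy = (\<Sum>k\<le>N. lie_term F y k)"
  define Rx Ry where "Rx = lie_exp F x - Sx" and "Ry = lie_exp F y - Sy"
  have Rx: "ord_ge (Suc N) Rx" and Ry: "ord_ge (Suc N) Ry"
    unfolding Rx_def Sx_def Ry_def Sy_def by (simp_all add: ord_ge_lie_exp_remainder[OF F])
  have "B (lie_exp F x) (lie_exp F y) = B (Sx + Rx) (Sy + Ry)"
    by (simp add: Rx_def Ry_def)
  also have "\<dots> = B Sx Sy + B Rx (Sy + Ry) + B Sx Ry"
    by (simp add: add_left add_right algebra_simps)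
  finally have "B (lie_exp F x) (lie_exp F y) = B Sx Sy + B Rx (Sy + Ry) + B Sx Ry" .
  moreover have "ord_ge (Suc (wdeg m)) (B Rx (Sy + Ry))"
    using ord_ge_B[OF Rx ord_ge_0[of "Sy + Ry"]] by (simp add: N_def)
  moreover have "ord_ge (Suc (wdeg m)) (B Sx Ry)"
    using ord_ge_B[OF ord_ge_0[of Sx] Ry] by (simp add: N_def)
  ultimately have "coeff (B (lie_exp F x) (lie_exp F y)) m = coeff (B Sx Sy) m"
    by (simp add: ord_geD)
  also have "\<dots> = (\<Sum>i\<le>N. \<Sum>j\<le>N. coeff (B (lie_term F x i) (lie_term F y j)) m)"
    by (simp only: Sx_def Sy_def sum_left sum_right coeff_sum) (rule sum.swap)
  also have "\<dots> = (\<Sum>n\<le>N. \<Sum>i\<le>n. coeff (B (lie_term F x i) (lie_term F y (n - i))) m)"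
  proof (rule sum_square_eq_sum_triangle)
    fix i j assume "N < i + j"
    moreover have "ord_ge (i + j - c) (B (lie_term F x i) (lie_term F y j))"
      by (rule ord_ge_B[OF ord_ge_lie_term[OF F] ord_ge_lie_term[OF F]])
    ultimately show "coeff (B (lie_term F x i) (lie_term F y j)) m = 0"
      by (simp add: ord_geD N_def)
  qed
  also have "\<dots> = (\<Sum>k\<le>N. coeff (lie_term F (B x y) k) m)"
    by (simp add: lie_term_leibniz[OF derivation])
  also have "\<dots> = coeff (lie_exp F (B x y)) m"
    by (rule coeff_lie_exp[symmetric, OF F]) (simp add: N_def)
  finally show "coeff (lie_exp F (B x y)) m = coeff (B (lie_exp F x) (lie_exp F y)) m" ..
qed

end

interpretation times_bilinear: graded_bilinear "(*)" 0
  by unfold_locales (simp_all add: algebra_simps ord_ge_mult)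

interpretation pbr_bilinear: graded_bilinear pbr 2
  by unfold_locales
    (simp_all add: pbr_add_left pbr_add_right pbr_const_mult_left pbr_const_mult_right ord_ge_pbr)

lemma lie_exp_mult: "ord_ge 3 F \<Longrightarrow> lie_exp F (x * y) = lie_exp F x * lie_exp F y"
  by (rule times_bilinear.lie_exp_leibniz, assumption, rule pbr_mult_right)

lemma lie_exp_pbr: "ord_ge 3 F \<Longrightarrow> lie_exp F (pbr x y) = pbr (lie_exp F x) (lie_exp F y)"
  by (rule pbr_bilinear.lie_exp_leibniz, assumption, rule pbr_jacobi)

lemma sum_alternating_inv_fact:
  "(\<Sum>a\<le>n. (-1) ^ a / (fact a * fact (n - a))) = (if n = 0 then 1 else (0::complex))"
proof -
  have "(\<Sum>a\<le>n. (-1) ^ a / (fact a * fact (n - a)))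
      = (1 / fact n) * (\<Sum>a\<le>n. (-1) ^ a * of_nat (n choose a) :: complex)"
    unfolding sum_distrib_left by (rule sum.cong) (simp_all add: binomial_fact)
  then show ?thesis by (simp add: choose_alternating_sum)
qed

lemma lie_exp_uminus_inverse:
  fixes F :: "'n::finite ser"
  assumes F: "ord_ge 3 F"
  shows "lie_exp (- F) (lie_exp F X) = X"
proof (rule ser_eqI)
  fix m :: "'n mon"
  define N where "N = wdeg m"
  define S where "S = (\<Sum>b\<le>N. lie_term F X b)"
  define R where "R = lie_exp F X - S"
  have R: "ord_ge (Suc N) R"
    unfolding R_def S_def by (rule ord_ge_lie_exp_remainder[OF F])
  have "coeff (lie_exp (- F) (lie_exp F X)) m = (\<Sum>a\<le>N. coeff (lie_term (- F) (S + R) a) m)"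
    using F by (simp add: coeff_lie_exp[where N = N] N_def R_def)
  also have "\<dots> = (\<Sum>a\<le>N. \<Sum>b\<le>N. (-1) ^ a / (fact a * fact b) * coeff ((pbr F ^^ (a + b)) X) m)"
  proof (rule sum.cong[OF refl])
    fix a
    have "coeff ((pbr F ^^ a) R) m = 0"
      using ord_ge_pbr_iter[OF F R, of a] by (rule ord_geD) (simp add: N_def)
    moreover have "(pbr F ^^ a) S = (\<Sum>b\<le>N. const_ser (1 / fact b) * (pbr F ^^ (a + b)) X)"
      by (simp add: S_def lie_term_def pbr_iter_sum pbr_iter_const_mult funpow_add)
    ultimately show "coeff (lie_term (- F) (S + R) a) m
        = (\<Sum>b\<le>N. (-1) ^ a / (fact a * fact b) * coeff ((pbr F ^^ (a + b)) X) m)"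
      by (simp add: lie_term_def pbr_iter_uminus pbr_iter_add sum_distrib_left)
  qed
  also have "\<dots> = (\<Sum>n\<le>N. \<Sum>a\<le>n. (-1) ^ a / (fact a * fact (n - a)) * coeff ((pbr F ^^ (a + (n - a))) X) m)"
  proof (rule sum_square_eq_sum_triangle)
    fix a b assume "N < a + b"
    then show "(-1) ^ a / (fact a * fact b) * coeff ((pbr F ^^ (a + b)) X) m = 0"
      using ord_ge_pbr_iter[OF F ord_ge_0[of X], of "a + b"] by (simp add: ord_geD N_def)
  qed
  also have "\<dots> = (\<Sum>n\<le>N. (\<Sum>a\<le>n. (-1) ^ a / (fact a * fact (n - a))) * coeff ((pbr F ^^ n) X) m)"
    by (simp add: sum_distrib_right)
  also have "\<dots> = (\<Sum>n\<le>N. if n = 0 then coeff ((pbr F ^^ n) X) m else 0)"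
    by (simp only: sum_alternating_inv_fact) (intro sum.cong refl, simp)
  also have "\<dots> = coeff X m"
    by simp
  finally show "coeff (lie_exp (- F) (lie_exp F X)) m = coeff X m" .
qed


lemma ord_ge_pbr_iter_diff:
  fixes F F' H :: "'n::finite ser"
  assumes F: "ord_ge 3 F" and F': "ord_ge 3 F'" and r: "ord_ge r (F - F')" and H: "ord_ge 2 H"
  shows "ord_ge (r + k) ((pbr F ^^ Suc k) H - (pbr F' ^^ Suc k) H)"
proof (induction k)
  case 0
  have "(pbr F ^^ Suc 0) H - (pbr F' ^^ Suc 0) H = pbr (F - F') H" by (simp add: pbr_diff_left)
  then show ?case using ord_ge_pbr[OF r H] by simp
next
  case (Suc k)
  have "(pbr F ^^ Suc (Suc k)) H - (pbr F' ^^ Suc (Suc k)) H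
     = pbr (F - F') ((pbr F ^^ Suc k) H) + pbr F' ((pbr F ^^ Suc k) H - (pbr F' ^^ Suc k) H)"
    by (simp add: pbr_diff_left pbr_diff_right)
  moreover have "ord_ge (r + Suc k) (pbr (F - F') ((pbr F ^^ Suc k) H))"
    using ord_ge_pbr[OF r ord_ge_pbr_iter[OF F H, of "Suc k"]] by (rule ord_ge_mono) simp
  moreover have "ord_ge (r + Suc k) (pbr F' ((pbr F ^^ Suc k) H - (pbr F' ^^ Suc k) H))"
    using ord_ge_pbr[OF F' Suc.IH] by (rule ord_ge_mono) simp
  ultimately show ?case by (simp add: ord_ge_add)
qed

lemma lie_exp_perturb:
  fixes F F' H :: "'n::finite ser"
  assumes F: "ord_ge 3 F" and F': "ord_ge 3 F'" and r: "ord_ge r (F - F')" and H: "ord_ge 2 H"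
  shows "ord_ge (Suc r) (lie_exp F H - lie_exp F' H - pbr (F - F') H)"
proof -
  define D where "D k = lie_term F H k - lie_term F' H k" for k
  have D: "ord_summable D"
    unfolding D_def by (intro ord_summable_diff ord_summable_lie_term F F')
  have "lie_exp F H - lie_exp F' H = ssum D"
    unfolding lie_exp_def D_def by (rule ssum_diff[symmetric]) (auto intro: ord_summable_lie_term F F')
  also have "\<dots> = (\<Sum>k\<le>1. D k) + ssum (\<lambda>k. if k \<le> 1 then 0 else D k)"
    by (rule ssum_split[OF D])
  also have "(\<Sum>k\<le>1. D k) = pbr (F - F') H"
    by (simp add: D_def lie_term_def pbr_diff_left)
  finally have "lie_exp F H - lie_exp F' H - pbr (F - F') H = ssum (\<lambda>k. if k \<le> 1 then 0 else D k)"
    by simp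
  moreover have "ord_ge (Suc r) (ssum (\<lambda>k. if k \<le> 1 then 0 else D k))"
  proof (rule ord_ge_ssum)
    fix k
    show "ord_ge (Suc r) (if k \<le> 1 then 0 else D k)"
    proof (cases "k \<le> 1")
      case False
      then obtain j where j: "k = Suc (Suc j)" by (metis Suc_le_D not_less_eq_eq One_nat_def)
      have "ord_ge (r + Suc j) ((pbr F ^^ k) H - (pbr F' ^^ k) H)"
        using ord_ge_pbr_iter_diff[OF F F' r H, of "Suc j"] j by simp
      then have "ord_ge (Suc r) ((pbr F ^^ k) H - (pbr F' ^^ k) H)"
        by (rule ord_ge_mono) simp
      then show ?thesis
        using False by (simp add: D_def lie_term_def ord_ge_const_mult flip: right_diff_distrib)
    qed simp
  qed
  ultimately show ?thesis by simp
qed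

section \<open>The homological equation\<close>

definition pq_ser :: "'n \<Rightarrow> 'n::finite ser" where
  "pq_ser i = var_ser (Pv i) * var_ser (Qv i)"

lemma pbr_var_Pv: "pbr G (var_ser (Pv j)) = pdiff (Qv j) G"
proof -
  have "pbr G (var_ser (Pv j)) = (\<Sum>i\<in>UNIV. if i = j then pdiff (Qv j) G else 0)"
    unfolding pbr_def by (intro sum.cong refl) (auto simp: pdiff_var)
  then show ?thesis by simp
qed

lemma pbr_var_Qv: "pbr G (var_ser (Qv j)) = - pdiff (Pv j) G"
proof -
  have "pbr G (var_ser (Qv j)) = (\<Sum>i\<in>UNIV. if i = j then - pdiff (Pv j) G else 0)"
    unfolding pbr_def by (intro sum.cong refl) (auto simp: pdiff_var)
  then show ?thesis by simp
qed

lemma pbr_pq_ser: "pbr G (pq_ser j) = euler (Qv j) G - euler (Pv j) G"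
  by (simp add: pq_ser_def pbr_mult_right pbr_var_Pv pbr_var_Qv flip: var_mult_pdiff)

definition quad_ham :: "('n \<Rightarrow> complex) \<Rightarrow> 'n::finite ser" where
  "quad_ham \<alpha> = (\<Sum>i\<in>UNIV. const_ser (\<alpha> i) * pq_ser i)"

definition freq :: "('n \<Rightarrow> complex) \<Rightarrow> 'n::finite mon \<Rightarrow> complex" where
  "freq \<alpha> m = (\<Sum>i\<in>UNIV. \<alpha> i * (of_nat (m (Qv i)) - of_nat (m (Pv i))))"

lemma coeff_pbr_quad_ham: "coeff (pbr G (quad_ham \<alpha>)) m = freq \<alpha> m * coeff G m"
proof -
  have "coeff (pbr G (quad_ham \<alpha>)) m = (\<Sum>i\<in>UNIV. coeff (const_ser (\<alpha> i) * pbr G (pq_ser i)) m)"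
    by (simp only: quad_ham_def pbr_sum_right pbr_const_mult_right coeff_sum)
  also have "\<dots> = (\<Sum>i\<in>UNIV. \<alpha> i * (of_nat (m (Qv i)) - of_nat (m (Pv i))) * coeff G m)"
    by (intro sum.cong refl) (simp add: pbr_pq_ser coeff_euler algebra_simps)
  also have "\<dots> = freq \<alpha> m * coeff G m"
    by (simp add: freq_def sum_distrib_right)
  finally show ?thesis .
qed

definition off_diag :: "'n::finite mon \<Rightarrow> bool" where
  "off_diag m \<longleftrightarrow> (\<exists>i. m (Qv i) \<noteq> m (Pv i))"

lemma freq_nonzero_if_independent:
  assumes indep: "\<forall>c :: 'n \<Rightarrow> rat. (\<Sum>i\<in>UNIV. of_rat (c i) * \<alpha> i) = 0 \<longrightarrow> (\<forall>i. c i = 0)"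
    and m: "off_diag m"
  shows "freq \<alpha> (m :: 'n::finite mon) \<noteq> 0"
proof
  assume freq_0: "freq \<alpha> m = 0"
  define c where "c i = (of_int (int (m (Qv i)) - int (m (Pv i))) :: rat)" for i
  have "(\<Sum>i\<in>UNIV. of_rat (c i) * \<alpha> i) = freq \<alpha> m"
    unfolding freq_def c_def by (intro sum.cong refl) (simp add: algebra_simps of_rat_diff)
  then have "\<forall>i. c i = 0" using indep freq_0 by simp
  then show False using m by (simp add: c_def off_diag_def)
qed

definition homological_sol :: "('n \<Rightarrow> complex) \<Rightarrow> 'n::finite ser \<Rightarrow> 'n ser" where
  "homological_sol \<alpha> X = Abs_ser (\<lambda>m. if off_diag m then - coeff X m / freq \<alpha> m else 0)"

lemma homog_homological_sol: "homog d X \<Longrightarrow> homog d (homological_sol \<alpha> X)"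
  by (simp add: homog_def homological_sol_def Abs_ser_inverse)

lemma coeff_pbr_homological_sol:
  assumes "\<And>m. off_diag m \<Longrightarrow> freq \<alpha> m \<noteq> 0"
  shows "coeff (pbr (homological_sol \<alpha> X) (quad_ham \<alpha>)) m = (if off_diag m then - coeff X m else 0)"
  by (simp add: coeff_pbr_quad_ham homological_sol_def Abs_ser_inverse assms)

section \<open>Birkhoff normalisation\<close>

text \<open>The generator is built degree by degree: the step in degree \<open>d + 1\<close> removes, by solving the
  homological equation, the off-diagonal terms of degree \<open>d + 1\<close> of the Hamiltonian normalised
  up to degree \<open>d\<close>.\<close>

fun birk_partial :: "('n \<Rightarrow> complex) \<Rightarrow> 'n::finite ser \<Rightarrow> nat \<Rightarrow> 'n ser" where
  "birk_partial \<alpha> H 0 = 0"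
| "birk_partial \<alpha> H (Suc d) = birk_partial \<alpha> H d
     + (if 3 \<le> Suc d then homological_sol \<alpha> (hpart (Suc d) (lie_exp (birk_partial \<alpha> H d) H)) else 0)"

definition birk_step :: "('n \<Rightarrow> complex) \<Rightarrow> 'n::finite ser \<Rightarrow> nat \<Rightarrow> 'n ser" where
  "birk_step \<alpha> H d =
     (if 3 \<le> Suc d then homological_sol \<alpha> (hpart (Suc d) (lie_exp (birk_partial \<alpha> H d) H)) else 0)"

definition birk_gen :: "('n \<Rightarrow> complex) \<Rightarrow> 'n::finite ser \<Rightarrow> 'n ser" where
  "birk_gen \<alpha> H = ssum (birk_step \<alpha> H)"

lemma birk_partial_Suc: "birk_partial \<alpha> H (Suc d) = birk_partial \<alpha> H d + birk_step \<alpha> H d"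
  by (simp add: birk_step_def)

lemma homog_birk_step: "homog (Suc d) (birk_step \<alpha> H d)"
  by (simp add: birk_step_def homog_homological_sol homog_hpart)

lemma ord_ge_birk_step: "ord_ge 3 (birk_step \<alpha> H d)"
proof (cases "3 \<le> Suc d")
  case True
  then show ?thesis by (rule ord_ge_mono[OF homog_imp_ord_ge[OF homog_birk_step]])
qed (simp add: birk_step_def)

lemma birk_partial_eq_sum: "birk_partial \<alpha> H d = (\<Sum>k<d. birk_step \<alpha> H k)"
  by (induction d) (simp_all only: birk_partial_Suc birk_partial.simps(1) sum.lessThan_Suc lessThan_0 sum.empty)

lemma ord_ge_birk_partial: "ord_ge 3 (birk_partial \<alpha> H d)"
  by (simp add: birk_partial_eq_sum ord_ge_sum ord_ge_birk_step)

lemma ord_ge_birk_gen: "ord_ge 3 (birk_gen \<alpha> H)"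
  by (simp add: birk_gen_def ord_ge_ssum ord_ge_birk_step)

lemma ord_ge_birk_gen_remainder: "ord_ge (Suc d) (birk_gen \<alpha> H - birk_partial \<alpha> H d)"
proof (cases d)
  case 0
  then show ?thesis using ord_ge_birk_gen[of \<alpha> H] by (simp add: ord_ge_mono)
next
  case (Suc N)
  have "ord_summable (birk_step \<alpha> H)"
    by (rule ord_summableI[where c = 0]) (simp add: ord_ge_mono[OF homog_imp_ord_ge[OF homog_birk_step]])
  then have "birk_gen \<alpha> H = (\<Sum>k\<le>N. birk_step \<alpha> H k) + ssum (\<lambda>k. if k \<le> N then 0 else birk_step \<alpha> H k)"
    unfolding birk_gen_def by (rule ssum_split)
  moreover have "(\<Sum>k\<le>N. birk_step \<alpha> H k) = birk_partial \<alpha> H d"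
    by (simp add: birk_partial_eq_sum Suc lessThan_Suc_atMost)
  moreover have "ord_ge (Suc d) (ssum (\<lambda>k. if k \<le> N then 0 else birk_step \<alpha> H k))"
  proof (rule ord_ge_ssum)
    fix k
    show "ord_ge (Suc d) (if k \<le> N then 0 else birk_step \<alpha> H k)"
      using homog_imp_ord_ge[OF homog_birk_step[of k \<alpha> H]] Suc by (auto elim: ord_ge_mono)
  qed
  ultimately show ?thesis by simp
qed

context
  fixes \<alpha> :: "'n::finite \<Rightarrow> complex" and H :: "'n ser"
  assumes H2: "ord_ge 2 H" and H3: "ord_ge 3 (H - quad_ham \<alpha>)"
    and nonresonant: "\<And>m. off_diag m \<Longrightarrow> freq \<alpha> m \<noteq> 0"
begin

lemma coeff_lie_exp_birk_gen_low:
  assumes m: "wdeg m < 3"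
  shows "coeff (lie_exp (birk_gen \<alpha> H) H) m = coeff (quad_ham \<alpha>) m"
proof -
  let ?F = "birk_gen \<alpha> H"
  have "ord_ge (Suc 3) (lie_exp ?F H - lie_exp 0 H - pbr (?F - 0) H)"
    by (rule lie_exp_perturb[OF ord_ge_birk_gen _ _ H2]) (simp_all add: ord_ge_birk_gen)
  moreover have "lie_exp 0 H = H"
    by (rule lie_exp_fixed) (simp add: pbr_def)
  moreover have "ord_ge 3 (pbr ?F H)"
    using ord_ge_pbr[OF ord_ge_birk_gen H2] by simp
  ultimately have "coeff (lie_exp ?F H) m = coeff H m"
    using m by (auto dest!: ord_geD[of _ _ m])
  also have "\<dots> = coeff (quad_ham \<alpha>) m"
    using ord_geD[OF H3 m] by simp
  finally show ?thesis .
qed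

text \<open>In degree \<open>d = e + 1\<close> the full generator acts like \<open>birk_partial \<alpha> H d\<close>, and the last step
  \<open>birk_step \<alpha> H e\<close> enters only linearly, through its bracket with \<open>quad_ham \<alpha>\<close>.\<close>

lemma coeff_lie_exp_birk_gen_off_diag:
  assumes off: "off_diag m" and d3: "3 \<le> wdeg m"
  shows "coeff (lie_exp (birk_gen \<alpha> H) H) m = 0"
proof -
  let ?F = "birk_gen \<alpha> H" and ?T = "birk_partial \<alpha> H" and ?G = "birk_step \<alpha> H"
  obtain e where e: "wdeg m = Suc e" using d3 not0_implies_Suc by fastforce
  have "ord_ge (Suc (Suc (wdeg m))) (lie_exp ?F H - lie_exp (?T (wdeg m)) H - pbr (?F - ?T (wdeg m)) H)"
    by (rule lie_exp_perturb[OF ord_ge_birk_gen ord_ge_birk_partial ord_ge_birk_gen_remainder H2])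
  moreover have "ord_ge (Suc (wdeg m)) (pbr (?F - ?T (wdeg m)) H)"
    using ord_ge_pbr[OF ord_ge_birk_gen_remainder H2] by simp
  ultimately have full: "coeff (lie_exp ?F H) m = coeff (lie_exp (?T (Suc e)) H) m"
    using e by (auto dest!: ord_geD[of _ _ m])
  have step: "?T (Suc e) - ?T e = ?G e"
    by (simp only: birk_partial_Suc add_diff_cancel_left')
  have step_ord: "ord_ge (Suc e) (?T (Suc e) - ?T e)"
    using step homog_imp_ord_ge[OF homog_birk_step[of e \<alpha> H]] by simp
  have "ord_ge (Suc (Suc e)) (lie_exp (?T (Suc e)) H - lie_exp (?T e) H - pbr (?G e) H)"
    using lie_exp_perturb[OF ord_ge_birk_partial ord_ge_birk_partial step_ord H2] by (simp only: step)
  moreover have "ord_ge (Suc (Suc e)) (pbr (?G e) (H - quad_ham \<alpha>))"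
    using ord_ge_pbr[OF homog_imp_ord_ge[OF homog_birk_step] H3, of e \<alpha> H] by simp
  moreover have "pbr (?G e) H = pbr (?G e) (quad_ham \<alpha>) + pbr (?G e) (H - quad_ham \<alpha>)"
    by (simp add: pbr_diff_right)
  ultimately have "coeff (lie_exp (?T (Suc e)) H) m
      = coeff (lie_exp (?T e) H) m + coeff (pbr (?G e) (quad_ham \<alpha>)) m"
    using e by (auto dest!: ord_geD[of _ _ m] simp: algebra_simps)
  moreover have "coeff (pbr (?G e) (quad_ham \<alpha>)) m = - coeff (lie_exp (?T e) H) m"
    using off e d3 by (simp add: birk_step_def coeff_pbr_homological_sol nonresonant coeff_hpart)
  ultimately show ?thesis using full by simp
qed

end


section \<open>Diagonal series modulo the square of the ideal\<close>

definition gen_ser :: "'n \<Rightarrow> 'n::finite ser" where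
  "gen_ser i = pq_ser i - var_ser (Lam i)"

definition I2_repr :: "'n::finite ser \<Rightarrow> ('n \<Rightarrow> 'n ser) \<Rightarrow> ('n \<times> 'n \<Rightarrow> 'n ser) \<Rightarrow> 'n ser" where
  "I2_repr L G B = L + (\<Sum>i\<in>UNIV. G i * pq_ser i) + (\<Sum>p\<in>UNIV. B p * (gen_ser (fst p) * gen_ser (snd p)))"

definition I2_coeffs :: "nat \<Rightarrow> 'n::finite ser \<Rightarrow> ('n \<Rightarrow> 'n ser) \<Rightarrow> ('n \<times> 'n \<Rightarrow> 'n ser) \<Rightarrow> bool" where
  "I2_coeffs d L G B \<longleftrightarrow> coeff L \<in> lam_series \<and> homog d L
      \<and> (\<forall>i. coeff (G i) \<in> lam_series \<and> homog (d - 2) (G i)) \<and> (\<forall>p. homog (d - 4) (B p))"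

definition I2_decomp :: "nat \<Rightarrow> 'n::finite ser \<Rightarrow> bool" where
  "I2_decomp d Y \<longleftrightarrow> (\<exists>L G B. I2_coeffs d L G B \<and> Y = I2_repr L G B)"

lemma I2_repr_add:
  "I2_repr L G B + I2_repr L' G' B' = I2_repr (L + L') (\<lambda>i. G i + G' i) (\<lambda>p. B p + B' p)"
  by (simp add: I2_repr_def distrib_right sum.distrib algebra_simps)

lemma I2_repr_const_mult:
  "const_ser c * I2_repr L G B = I2_repr (const_ser c * L) (\<lambda>i. const_ser c * G i) (\<lambda>p. const_ser c * B p)"
  by (simp add: I2_repr_def distrib_left sum_distrib_left mult.assoc)

lemma lam_series_zero [simp]: "coeff 0 \<in> lam_series"
  by (simp add: lam_series_def)
lemma lam_series_add:
  assumes "coeff x \<in> lam_series" "coeff y \<in> lam_series"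
  shows "coeff (x + y) \<in> lam_series"
  unfolding lam_series_def
proof (rule CollectI, rule allI, rule impI)
  fix m assume "coeff (x + y) m \<noteq> 0"
  then have "coeff x m \<noteq> 0 \<or> coeff y m \<noteq> 0" by auto
  then show "\<forall>i. m (Qv i) = 0 \<and> m (Pv i) = 0" using assms by (auto simp: lam_series_def)
qed
lemma lam_series_const_mult: "coeff x \<in> lam_series \<Longrightarrow> coeff (const_ser c * x) \<in> lam_series"
  by (simp add: lam_series_def)
lemma lam_series_ssum:
  assumes "\<And>d. coeff (L d) \<in> lam_series"
  shows "coeff (ssum L) \<in> lam_series"
  unfolding lam_series_def
proof (rule CollectI, rule allI, rule impI)
  fix m assume "coeff (ssum L) m \<noteq> 0"
  then obtain d where "coeff (L d) m \<noteq> 0"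
    unfolding ssum.rep_eq by (metis (mono_tags, lifting) empty_Collect_eq sum.empty)
  then show "\<forall>i. m (Qv i) = 0 \<and> m (Pv i) = 0" using assms[of d] by (auto simp: lam_series_def)
qed

lemma I2_coeffs_add:
  "I2_coeffs d L G B \<Longrightarrow> I2_coeffs d L' G' B' \<Longrightarrow> I2_coeffs d (L + L') (\<lambda>i. G i + G' i) (\<lambda>p. B p + B' p)"
  by (simp add: I2_coeffs_def lam_series_add homog_add)

lemma I2_coeffs_const_mult:
  "I2_coeffs d L G B \<Longrightarrow> I2_coeffs d (const_ser c * L) (\<lambda>i. const_ser c * G i) (\<lambda>p. const_ser c * B p)"
  by (simp add: I2_coeffs_def lam_series_const_mult homog_const_mult)

lemma I2_decomp_zero: "I2_decomp d 0"
  unfolding I2_decomp_def I2_coeffs_def I2_repr_def by (intro exI[of _ 0] exI[of _ "\<lambda>_. 0"]) simp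

lemma I2_decomp_add:
  assumes "I2_decomp d x" "I2_decomp d y"
  shows "I2_decomp d (x + y)"
proof -
  obtain L G B L' G' B' where c: "I2_coeffs d L G B" "I2_coeffs d L' G' B'"
    and xy: "x = I2_repr L G B" "y = I2_repr L' G' B'"
    using assms unfolding I2_decomp_def by blast
  show ?thesis
    unfolding I2_decomp_def xy I2_repr_add
    using I2_coeffs_add[OF c] by blast
qed

lemma I2_decomp_const_mult:
  assumes "I2_decomp d x"
  shows "I2_decomp d (const_ser c * x)"
proof -
  obtain L G B where c: "I2_coeffs d L G B" and x: "x = I2_repr L G B"
    using assms unfolding I2_decomp_def by blast
  show ?thesis
    unfolding I2_decomp_def x I2_repr_const_mult
    using I2_coeffs_const_mult[OF c] by blast
qed

lemma I2_decomp_diff: "I2_decomp d x \<Longrightarrow> I2_decomp d y \<Longrightarrow> I2_decomp d (x - y)"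
  using I2_decomp_add[of d x "const_ser (-1) * y"] I2_decomp_const_mult[of d y "-1"]
  by (simp add: const_ser_uminus)

lemma I2_decomp_sum: "(\<And>k. k \<in> S \<Longrightarrow> I2_decomp d (F k)) \<Longrightarrow> I2_decomp d (sum F S)"
  by (induction S rule: infinite_finite_induct) (auto intro: I2_decomp_add I2_decomp_zero)

lemma I2_decomp_lam: "coeff L \<in> lam_series \<Longrightarrow> homog d L \<Longrightarrow> I2_decomp d L"
  unfolding I2_decomp_def I2_coeffs_def I2_repr_def by (intro exI[of _ L] exI[of _ "\<lambda>_. 0"]) simp

lemma I2_decomp_linear:
  assumes "coeff G \<in> lam_series" "homog (d - 2) G"
  shows "I2_decomp d (G * pq_ser i)"
proof -
  have "(\<Sum>k\<in>UNIV. (if k = i then G else 0) * pq_ser k) = (\<Sum>k\<in>UNIV. if k = i then G * pq_ser k else 0)"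
    by (rule sum.cong) auto
  then show ?thesis unfolding I2_decomp_def I2_coeffs_def I2_repr_def using assms
    by (intro exI[of _ 0] exI[of _ "\<lambda>k. if k = i then G else 0"] exI[of _ "\<lambda>_. 0"]) simp
qed

lemma I2_decomp_quadratic:
  assumes "homog (d - 4) B"
  shows "I2_decomp d (B * (gen_ser i * gen_ser j))"
proof -
  have "(\<Sum>p\<in>UNIV. (if p = (i, j) then B else 0) * (gen_ser (fst p) * gen_ser (snd p)))
      = (\<Sum>p\<in>UNIV. if p = (i, j) then B * (gen_ser (fst p) * gen_ser (snd p)) else 0)"
    by (rule sum.cong) auto
  then show ?thesis unfolding I2_decomp_def I2_coeffs_def I2_repr_def using assms
    by (intro exI[of _ 0] exI[of _ "\<lambda>_. 0"] exI[of _ "\<lambda>p. if p = (i, j) then B else 0"]) simp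
qed

definition qdeg :: "'n::finite mon \<Rightarrow> nat" where
  "qdeg m = (\<Sum>i\<in>UNIV. m (Qv i))"

definition pq_mon :: "'n \<Rightarrow> 'n mon" where
  "pq_mon i = unit_mon (Pv i) + unit_mon (Qv i)"

lemma wdeg_pq_mon: "wdeg (pq_mon i) = 2"
  by (simp add: pq_mon_def wdeg_add wdeg_unit_mon var_weight_def)
lemma wdeg_unit_mon_Lam: "wdeg (unit_mon (Lam i)) = 2"
  by (simp add: wdeg_unit_mon var_weight_def)
lemma qdeg_add: "qdeg (a + b) = qdeg a + qdeg b"
  by (simp add: qdeg_def sum.distrib)
lemma qdeg_pq_mon: "qdeg (pq_mon i) = 1"
  by (simp add: qdeg_def pq_mon_def unit_mon_def)
lemma qdeg_unit_mon_Lam: "qdeg (unit_mon (Lam i)) = 0"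
  by (simp add: qdeg_def unit_mon_def)
lemma not_off_diag_add: "\<not> off_diag a \<Longrightarrow> \<not> off_diag b \<Longrightarrow> \<not> off_diag (a + b)"
  by (simp add: off_diag_def)
lemma not_off_diag_pq_mon: "\<not> off_diag (pq_mon i)"
  by (simp add: off_diag_def pq_mon_def unit_mon_def)
lemma not_off_diag_unit_mon_Lam: "\<not> off_diag (unit_mon (Lam i))"
  by (simp add: off_diag_def unit_mon_def)

lemma pq_ser_eq_monom: "pq_ser i = monom (pq_mon i)"
  by (simp add: pq_ser_def var_ser_def pq_mon_def monom_mult)

lemma lam_series_monom: "qdeg m = 0 \<Longrightarrow> \<not> off_diag m \<Longrightarrow> coeff (monom m) \<in> lam_series"
  by (auto simp: lam_series_def coeff_monom qdeg_def off_diag_def)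

lemma diag_mon_split_pq_mon:
  assumes "\<not> off_diag m" "qdeg m \<noteq> 0"
  obtains i m' where "m = m' + pq_mon i" "\<not> off_diag m'" "qdeg m = Suc (qdeg m')"
proof -
  obtain i where i: "m (Qv i) \<noteq> 0" using assms(2) by (auto simp: qdeg_def)
  then have le: "pq_mon i \<le> m" using assms(1) by (auto simp: pq_mon_def unit_mon_def le_fun_def off_diag_def)
  define m' where "m' = m - pq_mon i"
  have m: "m = m' + pq_mon i" using mon_add_diff[OF le] by (simp add: m'_def add.commute)
  moreover have "\<not> off_diag m'"
    using assms(1) m by (auto simp: off_diag_def pq_mon_def unit_mon_def)
  moreover have "qdeg m = Suc (qdeg m')" using m by (simp add: qdeg_add qdeg_pq_mon)
  ultimately show ?thesis by (rule that)
qed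

lemma pq_ser_mult_pq_ser:
  "pq_ser i * pq_ser j = gen_ser i * gen_ser j + var_ser (Lam i) * pq_ser j + var_ser (Lam j) * pq_ser i
     - var_ser (Lam i) * var_ser (Lam j)"
  by (simp add: gen_ser_def algebra_simps)

lemma monom_add_pq_mon_pq_mon:
  "monom (m + pq_mon i + pq_mon j) = monom m * (gen_ser i * gen_ser j)
     + monom (m + unit_mon (Lam i) + pq_mon j) + monom (m + unit_mon (Lam j) + pq_mon i)
     - monom (m + unit_mon (Lam i) + unit_mon (Lam j))"
proof -
  have "monom (m + pq_mon i + pq_mon j) = monom m * (pq_ser i * pq_ser j)"
    by (simp add: pq_ser_eq_monom monom_mult add.assoc)
  then show ?thesis
    unfolding pq_ser_mult_pq_ser by (simp add: pq_ser_eq_monom var_ser_def monom_mult algebra_simps)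
qed

text \<open>By induction on the \<open>q\<close>-degree: two factors \<open>p\<^sub>i q\<^sub>i\<close>, \<open>p\<^sub>j q\<^sub>j\<close> of a diagonal monomial are
  traded for \<open>g\<^sub>i g\<^sub>j \<in> I\<^sup>2\<close> and diagonal monomials of lower \<open>q\<close>-degree, where \<open>g\<^sub>i = p\<^sub>i q\<^sub>i - \<lambda>\<^sub>i\<close>.\<close>

lemma I2_decomp_diag_monom: "\<not> off_diag m \<Longrightarrow> I2_decomp (wdeg m) (monom m)"
proof (induction "qdeg m" arbitrary: m rule: less_induct)
  case less
  show ?case
  proof (cases "qdeg m = 0")
    case True
    then show ?thesis by (intro I2_decomp_lam homog_monom lam_series_monom less.prems)
  next
    case False
    then obtain i m1 where m1: "m = m1 + pq_mon i" "\<not> off_diag m1" "qdeg m = Suc (qdeg m1)"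
      using diag_mon_split_pq_mon[OF less.prems] by blast
    have wdeg_m: "wdeg m = wdeg m1 + 2" using m1(1) by (simp add: wdeg_add wdeg_pq_mon)
    show ?thesis
    proof (cases "qdeg m1 = 0")
      case True
      have "monom m = monom m1 * pq_ser i" by (simp add: m1(1) pq_ser_eq_monom monom_mult)
      then show ?thesis
        using homog_monom[of m1] wdeg_m
        by (simp add: I2_decomp_linear lam_series_monom True m1(2))
    next
      case False
      then obtain j m2 where m2: "m1 = m2 + pq_mon j" "\<not> off_diag m2" "qdeg m1 = Suc (qdeg m2)"
        using diag_mon_split_pq_mon[OF m1(2)] by blast
      have wdeg_m1: "wdeg m1 = wdeg m2 + 2" using m2(1) by (simp add: wdeg_add wdeg_pq_mon)
      have IH: "I2_decomp (wdeg m) (monom (m2 + a + b))"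
        if "wdeg a = 2" "wdeg b = 2" "\<not> off_diag a" "\<not> off_diag b" "qdeg a + qdeg b \<le> 1" for a b
      proof -
        have "I2_decomp (wdeg (m2 + a + b)) (monom (m2 + a + b))"
          using that m1(3) m2(2,3) by (intro less.hyps) (auto simp: qdeg_add not_off_diag_add)
        then show ?thesis using that by (simp add: wdeg_add wdeg_m wdeg_m1)
      qed
      have homog_m2: "homog (wdeg m - 4) (monom m2)" using homog_monom[of m2] wdeg_m wdeg_m1 by simp
      have m: "m2 + pq_mon i + pq_mon j = m" using m1(1) m2(1) by (simp add: add_ac)
      have "I2_decomp (wdeg m) (monom (m2 + pq_mon i + pq_mon j))"
        using homog_m2 unfolding monom_add_pq_mon_pq_mon
        by (intro I2_decomp_add I2_decomp_diff I2_decomp_quadratic IH,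
          simp_all add: wdeg_pq_mon wdeg_unit_mon_Lam not_off_diag_pq_mon not_off_diag_unit_mon_Lam
            qdeg_pq_mon qdeg_unit_mon_Lam)
      then show ?thesis by (simp only: m)
    qed
  qed
qed

lemma I2_decomp_hpart:
  fixes f :: "'n::finite ser"
  assumes "\<And>m. off_diag m \<Longrightarrow> coeff f m = 0"
  shows "I2_decomp d (hpart d f)"
  unfolding hpart_eq_monom_sum
proof (rule I2_decomp_sum)
  fix m :: "'n mon" assume "m \<in> {m. wdeg m = d}"
  then show "I2_decomp d (const_ser (coeff f m) * monom m)"
    using assms I2_decomp_diag_monom[of m]
    by (cases "off_diag m") (auto intro: I2_decomp_const_mult simp: I2_decomp_zero)
qed

lemma diag_ser_decomp:
  fixes f :: "'n::finite ser"
  assumes "\<And>m. off_diag m \<Longrightarrow> coeff f m = 0"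
  obtains L G B where "coeff L \<in> lam_series" "\<And>i. coeff (G i) \<in> lam_series" "f = I2_repr L G B"
proof -
  have "\<forall>d. \<exists>L G B. I2_coeffs d L G B \<and> hpart d f = I2_repr L G B"
    using I2_decomp_hpart[OF assms] unfolding I2_decomp_def by (rule allI)
  then obtain L G B where coeffs: "\<And>d. I2_coeffs d (L d) (G d) (B d)"
    and parts: "\<And>d. hpart d f = I2_repr (L d) (G d) (B d)"
    by metis
  have L: "ord_summable L"
    by (rule ord_summable_homog[where c = 0]) (use coeffs in \<open>simp add: I2_coeffs_def\<close>)
  have G: "ord_summable (\<lambda>d. G d i)" for i
    by (rule ord_summable_homog[where c = 2]) (use coeffs in \<open>unfold I2_coeffs_def, blast\<close>)
  have B: "ord_summable (\<lambda>d. B d p)" for p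
    by (rule ord_summable_homog[where c = 4]) (use coeffs in \<open>unfold I2_coeffs_def, blast\<close>)
  have GS: "ord_summable (\<lambda>d. \<Sum>i\<in>UNIV. G d i * pq_ser i)"
    by (intro ord_summable_sum ord_summable_mult_right G)
  have BS: "ord_summable (\<lambda>d. \<Sum>p\<in>UNIV. B d p * (gen_ser (fst p) * gen_ser (snd p)))"
    by (intro ord_summable_sum ord_summable_mult_right B)
  have "f = ssum (\<lambda>d. I2_repr (L d) (G d) (B d))"
    by (simp add: ssum_hpart flip: parts)
  also have "\<dots> = I2_repr (ssum L) (\<lambda>i. ssum (\<lambda>d. G d i)) (\<lambda>p. ssum (\<lambda>d. B d p))"
    unfolding I2_repr_def
    by (simp only: ssum_add[OF ord_summable_add[OF L GS] BS] ssum_add[OF L GS]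
        ssum_sum ord_summable_mult_right G B ssum_mult_right)
  finally show ?thesis
    by (rule that[rotated 2]) (use coeffs in \<open>simp_all add: lam_series_ssum I2_coeffs_def\<close>)
qed


lemma coeff_quad_ham_off_diag: "off_diag m \<Longrightarrow> coeff (quad_ham \<alpha>) m = 0"
proof -
  assume "off_diag m"
  then have "m \<noteq> pq_mon i" for i using not_off_diag_pq_mon[of i] by metis
  then show ?thesis by (simp add: quad_ham_def pq_ser_eq_monom coeff_monom)
qed

lemma homog_quad_ham: "homog 2 (quad_ham \<alpha>)"
  unfolding quad_ham_def by (intro homog_sum homog_const_mult) (metis pq_ser_eq_monom homog_monom wdeg_pq_mon)

theorem birkhoff_normal_form:
  fixes H :: "'n::finite ser"
  assumes H2: "ord_ge 2 H" and H3: "ord_ge 3 (H - quad_ham \<alpha>)"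
    and nonresonant: "\<And>m. off_diag m \<Longrightarrow> freq \<alpha> m \<noteq> 0"
  obtains F L G B where "ord_ge 3 F" "coeff L \<in> lam_series" "\<And>i. coeff (G i) \<in> lam_series"
    "lie_exp F H - (\<Sum>i\<in>UNIV. (const_ser (\<alpha> i) + G i) * pq_ser i)
       = (\<Sum>p\<in>UNIV. B p * (gen_ser (fst p) * gen_ser (snd p))) + L"
proof -
  let ?K = "lie_exp (birk_gen \<alpha> H) H"
  have off_diag_0: "coeff (?K - quad_ham \<alpha>) m = 0" if "off_diag m" for m
  proof (cases "wdeg m < 3")
    case True
    then show ?thesis using coeff_lie_exp_birk_gen_low[OF H2 H3 nonresonant] by simp
  next
    case False
    then show ?thesis
      using coeff_lie_exp_birk_gen_off_diag[OF H2 H3 nonresonant that] coeff_quad_ham_off_diag[OF that]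
      by simp
  qed
  obtain L G B where L: "coeff L \<in> lam_series" and G: "\<And>i. coeff (G i) \<in> lam_series"
    and decomp: "?K - quad_ham \<alpha> = I2_repr L G B"
    using diag_ser_decomp[OF off_diag_0] by blast
  have "?K - (\<Sum>i\<in>UNIV. (const_ser (\<alpha> i) + G i) * pq_ser i) = (?K - quad_ham \<alpha>) - (\<Sum>i\<in>UNIV. G i * pq_ser i)"
    by (simp add: quad_ham_def distrib_right sum.distrib algebra_simps)
  also have "\<dots> = (\<Sum>p\<in>UNIV. B p * (gen_ser (fst p) * gen_ser (snd p))) + L"
    by (simp add: decomp I2_repr_def)
  finally show ?thesis
    by (rule that[OF ord_ge_birk_gen L G])
qed

lemma Abs_ser_ps_add: "Abs_ser (ps_add f g) = Abs_ser f + Abs_ser g"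
  by (simp add: plus_ser.abs_eq)
lemma Abs_ser_ps_mult: "Abs_ser (ps_mult f g) = Abs_ser f * Abs_ser g"
  by (simp add: times_ser.abs_eq)

lemma coeff_sum_fun: "coeff (sum F S) = ps_sum (\<lambda>i. coeff (F i)) S"
  by (simp add: ps_sum_def fun_eq_iff)

lemma coeff_pbr: "coeff (pbr x y) = poisson (coeff x) (coeff y)"
  unfolding pbr_def poisson_def by (simp only: coeff_sum_fun minus_ser.rep_eq times_ser.rep_eq pdiff.rep_eq)

lemma Abs_ser_poisson: "Abs_ser (poisson f g) = pbr (Abs_ser f) (Abs_ser g)"
proof -
  have "coeff (pbr (Abs_ser f) (Abs_ser g)) = poisson f g"
    by (simp add: coeff_pbr Abs_ser_inverse)
  then show ?thesis by (metis coeff_inverse)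
qed

lemma coeff_pq_ser: "coeff (pq_ser i) = pq i"
proof -
  have "coeff (var_ser v) = ps_var v" for v :: "'a var"
    by (simp add: var_ser_def monom.rep_eq ps_var_def unit_mon_def)
  then show ?thesis by (simp add: pq_def pq_ser_def times_ser.rep_eq)
qed

lemma coeff_gen_ser: "coeff (gen_ser i) = gen i"
  by (simp add: gen_def gen_ser_def minus_ser.rep_eq coeff_pq_ser var_ser_def monom.rep_eq ps_var_def unit_mon_def)

lemma coeff_quad_ham: "coeff (quad_ham \<alpha>) = ps_sum (\<lambda>i. ps_mult (ps_const (\<alpha> i)) (pq i)) UNIV"
  by (simp add: quad_ham_def coeff_sum_fun times_ser.rep_eq const_ser.rep_eq coeff_pq_ser)

lemma coeff_sum_mult_gen_ser_in_ideal_I2: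
  "coeff (\<Sum>p\<in>UNIV. B p * (gen_ser (fst p) * gen_ser (snd p))) \<in> ideal_I2"
proof -
  have "coeff (\<Sum>p\<in>UNIV. B p * (gen_ser (fst p) * gen_ser (snd p)))
      = ps_sum (\<lambda>(i, j). ps_mult (coeff (B (i, j))) (ps_mult (gen i) (gen j))) UNIV"
    by (simp add: coeff_sum_fun times_ser.rep_eq coeff_gen_ser case_prod_unfold)
  then show ?thesis
    unfolding ideal_I2_def by (intro CollectI exI[of _ "\<lambda>i j. coeff (B (i, j))"]) simp
qed

lemma pbr_lam_series: "coeff X \<in> lam_series \<Longrightarrow> pbr F X = 0"
proof -
  assume X: "coeff X \<in> lam_series"
  have "pdiff v X = 0" if "v = Qv i \<or> v = Pv i" for v i
  proof (rule ser_eqI)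
    fix m
    have "coeff X (m(v := Suc (m v))) = 0"
    proof (rule ccontr)
      assume "coeff X (m(v := Suc (m v))) \<noteq> 0"
      then have "(m(v := Suc (m v))) (Qv i) = 0 \<and> (m(v := Suc (m v))) (Pv i) = 0"
        using X unfolding lam_series_def by blast
      then show False using that by auto
    qed
    then show "coeff (pdiff v X) m = coeff 0 m" by (simp add: coeff_pdiff)
  qed
  then show ?thesis by (simp add: pbr_def)
qed

lemma poisson_aut_lie_exp:
  fixes F :: "'n::finite ser"
  assumes F: "ord_ge 3 F"
  shows "poisson_aut (\<lambda>f. coeff (lie_exp F (Abs_ser f)))"
  unfolding poisson_aut_def
proof (intro conjI allI impI)
  have "bij (coeff \<circ> lie_exp F \<circ> Abs_ser)"
    using lie_exp_uminus_inverse[OF F] lie_exp_uminus_inverse[of "- F"] F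
    by (intro o_bij[where g = "coeff \<circ> lie_exp (- F) \<circ> Abs_ser"])
       (auto simp: fun_eq_iff coeff_inverse Abs_ser_inverse)
  then show "bij (\<lambda>f. coeff (lie_exp F (Abs_ser f)))" by (simp add: comp_def)
  fix f g :: "'n ps"
  show "coeff (lie_exp F (Abs_ser (ps_add f g))) = ps_add (coeff (lie_exp F (Abs_ser f))) (coeff (lie_exp F (Abs_ser g)))"
    by (simp add: Abs_ser_ps_add lie_exp_add[OF F] plus_ser.rep_eq)
  show "coeff (lie_exp F (Abs_ser (ps_mult f g))) = ps_mult (coeff (lie_exp F (Abs_ser f))) (coeff (lie_exp F (Abs_ser g)))"
    by (simp add: Abs_ser_ps_mult lie_exp_mult[OF F] times_ser.rep_eq)
  show "coeff (lie_exp F (Abs_ser (poisson f g))) = poisson (coeff (lie_exp F (Abs_ser f))) (coeff (lie_exp F (Abs_ser g)))"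
    by (simp add: Abs_ser_poisson lie_exp_pbr[OF F] coeff_pbr)
next
  show "coeff (lie_exp F (Abs_ser (ps_const 1))) = ps_const 1"
    by (simp add: lie_exp_fixed pbr_def one_ser.abs_eq[symmetric] one_ser.rep_eq)
next
  fix c f :: "'n ps"
  assume "c \<in> lam_series"
  then have "lie_exp F (Abs_ser c) = Abs_ser c"
    by (intro lie_exp_fixed pbr_lam_series) (simp add: Abs_ser_inverse)
  then show "coeff (lie_exp F (Abs_ser (ps_mult c f))) = ps_mult c (coeff (lie_exp F (Abs_ser f)))"
    by (simp add: Abs_ser_ps_mult lie_exp_mult[OF F] times_ser.rep_eq Abs_ser_inverse)
qed

lemma ord_ge_Abs_ser_if_eq_plus_o:
  assumes "eq_plus_o 2 H (ps_sum (\<lambda>i. ps_mult (ps_const (\<alpha> i)) (pq i)) UNIV)"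
  shows "ord_ge 2 (Abs_ser H)" and "ord_ge 3 (Abs_ser H - quad_ham \<alpha>)"
proof -
  have low: "coeff (Abs_ser H) m = coeff (quad_ham \<alpha>) m" if "wdeg m \<le> 2" for m
    using assms that by (simp add: eq_plus_o_def coeff_quad_ham mon_deg_eq_wdeg Abs_ser_inverse)
  then show "ord_ge 2 (Abs_ser H)"
    using homog_quad_ham[of \<alpha>] by (auto simp: ord_ge_def homog_def)
  show "ord_ge 3 (Abs_ser H - quad_ham \<alpha>)"
    using low by (simp add: ord_ge_def)
qed

lemma coeff_eq_of_I2_normal_form:
  assumes "X - (\<Sum>i\<in>UNIV. (const_ser (\<alpha> i) + G i) * pq_ser i)
    = (\<Sum>p\<in>UNIV. B p * (gen_ser (fst p) * gen_ser (snd p))) + L"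
  shows "ps_diff (coeff X) (ps_sum (\<lambda>i. ps_mult (ps_add (ps_const (\<alpha> i)) (coeff (G i))) (pq i)) UNIV)
    = ps_add (coeff (\<Sum>p\<in>UNIV. B p * (gen_ser (fst p) * gen_ser (snd p)))) (coeff L)"
proof -
  have "ps_sum (\<lambda>i. ps_mult (ps_add (ps_const (\<alpha> i)) (coeff (G i))) (pq i)) UNIV
      = coeff (\<Sum>i\<in>UNIV. (const_ser (\<alpha> i) + G i) * pq_ser i)"
    by (simp add: coeff_sum_fun times_ser.rep_eq plus_ser.rep_eq const_ser.rep_eq coeff_pq_ser)
  then show ?thesis
    by (simp only: minus_ser.rep_eq[symmetric] assms plus_ser.rep_eq)
qed

theorem proposition2:
  fixes H :: "'n::finite ps" and \<alpha> :: "'n \<Rightarrow> complex"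
  assumes "eq_plus_o 2 H (ps_sum (\<lambda>i. ps_mult (ps_const (\<alpha> i)) (pq i)) UNIV)"
    and "\<forall>c :: 'n \<Rightarrow> rat. (\<Sum>i\<in>UNIV. of_rat (c i) * \<alpha> i) = 0 \<longrightarrow> (\<forall>i. c i = 0)"
  shows "\<exists>\<phi> g. poisson_aut \<phi> \<and> (\<forall>i. g i \<in> lam_series) \<and>
           (\<exists>a\<in>ideal_I2. \<exists>b\<in>lam_series.
              ps_diff (\<phi> H) (ps_sum (\<lambda>i. ps_mult (ps_add (ps_const (\<alpha> i)) (g i)) (pq i)) UNIV)
              = ps_add a b)"
proof -
  obtain F L G B where F: "ord_ge 3 F" and L: "coeff L \<in> lam_series" and G: "\<And>i. coeff (G i) \<in> lam_series"
    and nf: "lie_exp F (Abs_ser H) - (\<Sum>i\<in>UNIV. (const_ser (\<alpha> i) + G i) * pq_ser i)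
       = (\<Sum>p\<in>UNIV. B p * (gen_ser (fst p) * gen_ser (snd p))) + L"
    using birkhoff_normal_form[OF ord_ge_Abs_ser_if_eq_plus_o[OF assms(1)]
        freq_nonzero_if_independent[OF assms(2)]] by blast
  show ?thesis
  proof (intro exI conjI allI)
    show "poisson_aut (\<lambda>f. coeff (lie_exp F (Abs_ser f)))"
      by (rule poisson_aut_lie_exp[OF F])
    show "coeff (G i) \<in> lam_series" for i
      by (rule G)
    show "\<exists>a\<in>ideal_I2. \<exists>b\<in>lam_series. ps_diff (coeff (lie_exp F (Abs_ser H)))
        (ps_sum (\<lambda>i. ps_mult (ps_add (ps_const (\<alpha> i)) (coeff (G i))) (pq i)) UNIV) = ps_add a b"
      using coeff_eq_of_I2_normal_form[OF nf] coeff_sum_mult_gen_ser_in_ideal_I2 L by blast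
  qed
qed

end
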